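(* Let $A \in \mathbb{Z}^{(n-2)\times n}$ have rank $n-2$ with $\ker_{\mathbb{Z}}A\cap\mathbb{N}^n=\{0\}$, let $B$ be a Gale transform of $A$ with all rows nonzero, and let $\tilde B=\{\tilde b_1,\dots,\tilde b_n\}$ be the reduced Gale transform. Then $I_A$ is strongly robust if and only if $-\tilde b_i\in\mathcal{H}_A$ for every $i=1,\dots,n$.
   Context: $I_A = \langle p^u - p^v : u,v\in\mathbb{N}^n,\ Au = Av\rangle \subseteq \mathbb{K}[p_1,\dots,p_n]$. For $u \in \mathbb{N}^n$, $\mathcal{F}(u)=\{v\in\mathbb{N}^n : Av = Au\}$. A binomial $p^u - p^v$ is indispensable if $\mathcal{F}(u)=\{u,v\}$ and $\mathrm{supp}(u)\cap\mathrm{supp}(v)=\emptyset$; the set of these is $\mathcal{S}(A)$. A binomial $p^u-p^v\in I_A$ is primitive if there is no other binomial $p^{u'}-p^{v'}\in I_A$ with $p^{u'}\mid p^u$ and $p^{v'}\mid p^v$; the Graver basis $\mathcal{G}r(A)$ is the set of primitive binomials. $I_A$ is strongly robust if $\mathcal{S}(A)=\mathcal{G}r(A)$. A Gale transform of $A$ is an $n\times 2$ integer matrix $B$ whose columns form a basis of $\ker_{\mathbb{Z}}A$, with rows $b_i=(b_{i1},b_{i2})$. The reduced Gale transform is $\tilde B$ with $\tilde b_i=\gcd(b_{i1},b_{i2})^{-1}(-b_{i2},b_{i1})$. Since $\ker_{\mathbb{Z}}A\cap\mathbb{N}^n=\{0\}$, the $\tilde b_i$ are not contained in any closed half-plane through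 the origin; index them in cyclic (counterclockwise angular) order so that for each $i$ (with $\tilde b_{n+1}=\tilde b_1$) no other $\tilde b_j$ lies in the interior of $\mathrm{cone}(\tilde b_i,\tilde b_{i+1})$. Let $H_i$ be the Hilbert basis (minimal generating set of the monoid $\mathrm{cone}(\tilde b_i,\tilde b_{i+1})\cap\mathbb{Z}^2$). The Hilbert basis of the reduced Gale configuration is $\mathcal{H}_A=\{u\in\mathbb{Z}^2 : u\in H_1\cup\cdots\cup H_n \text{ and } -u\in H_1\cup\cdots\cup H_n\}$. *)

theory Defs
  imports Complex_Main
begin

text \<open>Integer matrices are functions nat => nat => int, indexed by row and column;
  integer/natural vectors are functions nat => _ with entries beyond the dimension
  ignored (integer vectors) or required to be zero (natural vectors).\<close>

definition full_row_rank :: "(nat \<Rightarrow> nat \<Rightarrow> int) \<Rightarrow> nat \<Rightarrow> nat \<Rightarrow> bool" where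
  "full_row_rank A m n \<longleftrightarrow>
     (\<forall>y :: nat \<Rightarrow> real. (\<forall>j<n. (\<Sum>i<m. y i * of_int (A i j)) = 0) \<longrightarrow> (\<forall>i<m. y i = 0))"

definition pointed_kernel :: "(nat \<Rightarrow> nat \<Rightarrow> int) \<Rightarrow> nat \<Rightarrow> nat \<Rightarrow> bool" where
  "pointed_kernel A m n \<longleftrightarrow>
     (\<forall>x :: nat \<Rightarrow> int. (\<forall>j<n. x j \<ge> 0) \<and> (\<forall>i<m. (\<Sum>j<n. A i j * x j) = 0)
        \<longrightarrow> (\<forall>j<n. x j = 0))"

text \<open>B (rows b j = (b_j1, b_j2), j < n) is a Gale transform of A: its two columns
  form a Z-basis of ker_Z A.\<close>
definition gale_transform ::
  "(nat \<Rightarrow> nat \<Rightarrow> int) \<Rightarrow> nat \<Rightarrow> nat \<Rightarrow> (nat \<Rightarrow> int \<times> int) \<Rightarrow> bool" where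
  "gale_transform A m n b \<longleftrightarrow>
     (\<forall>i<m. (\<Sum>j<n. A i j * fst (b j)) = 0) \<and>
     (\<forall>i<m. (\<Sum>j<n. A i j * snd (b j)) = 0) \<and>
     (\<forall>x :: nat \<Rightarrow> int. (\<forall>i<m. (\<Sum>j<n. A i j * x j) = 0) \<longrightarrow>
        (\<exists>!l :: int \<times> int. \<forall>j<n. x j = fst l * fst (b j) + snd l * snd (b j)))"

definition reduced_gale :: "int \<times> int \<Rightarrow> int \<times> int" where
  "reduced_gale v = (- snd v div gcd (fst v) (snd v), fst v div gcd (fst v) (snd v))"

definition to_complex :: "int \<times> int \<Rightarrow> complex" where
  "to_complex v = Complex (of_int (fst v)) (of_int (snd v))"

definition ccw_order :: "nat \<Rightarrow> (nat \<Rightarrow> int \<times> int) \<Rightarrow> (nat \<Rightarrow> nat) \<Rightarrow> bool" where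
  "ccw_order n bt \<sigma> \<longleftrightarrow> bij_betw \<sigma> {..<n} {..<n} \<and>
     (\<forall>i j. i \<le> j \<and> j < n \<longrightarrow> Arg (to_complex (bt (\<sigma> i))) \<le> Arg (to_complex (bt (\<sigma> j))))"

definition cone_monoid :: "int \<times> int \<Rightarrow> int \<times> int \<Rightarrow> (int \<times> int) set" where
  "cone_monoid u v = {x. \<exists>a b :: real. a \<ge> 0 \<and> b \<ge> 0 \<and>
      of_int (fst x) = a * of_int (fst u) + b * of_int (fst v) \<and>
      of_int (snd x) = a * of_int (snd u) + b * of_int (snd v)}"

definition generates :: "(int \<times> int) set \<Rightarrow> (int \<times> int) set \<Rightarrow> bool" where
  "generates G M \<longleftrightarrow> (\<forall>x\<in>M. \<exists>F (c :: int \<times> int \<Rightarrow> nat). finite F \<and> F \<subseteq> G \<and>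
      x = ((\<Sum>g\<in>F. int (c g) * fst g), (\<Sum>g\<in>F. int (c g) * snd g)))"

definition hilbert_basis :: "(int \<times> int) set \<Rightarrow> (int \<times> int) set" where
  "hilbert_basis M = (THE G. G \<subseteq> M \<and> generates G M \<and> (\<forall>G'. G' \<subset> G \<longrightarrow> \<not> generates G' M))"

definition neg2 :: "int \<times> int \<Rightarrow> int \<times> int" where
  "neg2 v = (- fst v, - snd v)"

definition gale_hilbert :: "nat \<Rightarrow> (nat \<Rightarrow> int \<times> int) \<Rightarrow> (nat \<Rightarrow> nat) \<Rightarrow> (int \<times> int) set" where
  "gale_hilbert n bt \<sigma> =
     (let H = (\<Union>i<n. hilbert_basis (cone_monoid (bt (\<sigma> i)) (bt (\<sigma> ((i + 1) mod n)))))
      in {u. u \<in> H \<and> neg2 u \<in> H})"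

definition natvecs :: "nat \<Rightarrow> (nat \<Rightarrow> nat) set" where
  "natvecs n = {u. \<forall>j\<ge>n. u j = 0}"

definition matmul :: "(nat \<Rightarrow> nat \<Rightarrow> int) \<Rightarrow> nat \<Rightarrow> nat \<Rightarrow> (nat \<Rightarrow> nat) \<Rightarrow> nat \<Rightarrow> int" where
  "matmul A m n u = (\<lambda>i. if i < m then (\<Sum>j<n. A i j * int (u j)) else 0)"

definition fiber :: "(nat \<Rightarrow> nat \<Rightarrow> int) \<Rightarrow> nat \<Rightarrow> nat \<Rightarrow> (nat \<Rightarrow> nat) \<Rightarrow> (nat \<Rightarrow> nat) set" where
  "fiber A m n u = {v \<in> natvecs n. matmul A m n v = matmul A m n u}"

text \<open>A (nonzero) binomial p^u - p^v is encoded by the pair (u, v) with u \<noteq> v;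
  p^u - p^v \<in> I_A iff Au = Av.\<close>
definition indispensable_set :: "(nat \<Rightarrow> nat \<Rightarrow> int) \<Rightarrow> nat \<Rightarrow> nat \<Rightarrow> ((nat \<Rightarrow> nat) \<times> (nat \<Rightarrow> nat)) set" where
  "indispensable_set A m n = {(u, v). u \<in> natvecs n \<and> v \<in> natvecs n \<and> u \<noteq> v \<and>
      fiber A m n u = {u, v} \<and> (\<forall>j. u j = 0 \<or> v j = 0)}"

text \<open>Primitive binomials; p^u' divides p^u iff u' \<le> u componentwise.\<close>
definition graver_set :: "(nat \<Rightarrow> nat \<Rightarrow> int) \<Rightarrow> nat \<Rightarrow> nat \<Rightarrow> ((nat \<Rightarrow> nat) \<times> (nat \<Rightarrow> nat)) set" where
  "graver_set A m n = {(u, v). u \<in> natvecs n \<and> v \<in> natvecs n \<and> u \<noteq> v \<and>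
      matmul A m n u = matmul A m n v \<and>
      \<not> (\<exists>u' v'. u' \<in> natvecs n \<and> v' \<in> natvecs n \<and> u' \<noteq> v' \<and>
             matmul A m n u' = matmul A m n v' \<and> u' \<le> u \<and> v' \<le> v \<and> (u', v') \<noteq> (u, v))}"

definition strongly_robust :: "(nat \<Rightarrow> nat \<Rightarrow> int) \<Rightarrow> nat \<Rightarrow> nat \<Rightarrow> bool" where
  "strongly_robust A m n \<longleftrightarrow> indispensable_set A m n = graver_set A m n"

end

theory Submission
  imports Defs "HOL-Library.Product_Plus"
begin

text \<open>Write w_i for the reduced Gale vectors. The Gale transform identifies the kernel lattice
  of A with Z^2: the vector l stands for the kernel element whose i-th entry is a positive multiple
  of det(l, w_i). The binomial p^(l+) - p^(l-) is primitive iff l is conformally minimal, and it is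
  indispensable iff no y other than 0 and l satisfies det(y, w_i) \<le> max 0 (det(l, w_i)) for all i.
  Hence I_A is strongly robust iff every Graver element l is indispensable.

  The consecutive Gale vectors cut the plane into cones containing no further Gale vector, and the
  Hilbert basis of such a cone consists of its irreducible elements. If every Graver element is
  indispensable, so is w_i, and a splitting -w_i = y + z inside a cone would produce the extra fiber
  point -z of w_i^+. Conversely, a Graver element that is not indispensable splits as l = y + z with
  no Gale vector strictly between y and z. If no -w_i lies strictly between them either, y is a
  conformal part of l; otherwise l splits again at such a -w_i with a smaller det(y, z), because
  -w_i stays irreducible in every subcone of its cone. The w_i themselves always belong to H_A, as
  primitive generators of the cone boundaries.\<close>

section \<open>Hilbert bases of graded submonoids of Z^2\<close>

inductive_set nat_span :: "(int \<times> int) set \<Rightarrow> (int \<times> int) set" for G where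
  zero: "0 \<in> nat_span G"
| add_gen: "g \<in> G \<Longrightarrow> x \<in> nat_span G \<Longrightarrow> g + x \<in> nat_span G"

lemma nat_span_add: "x \<in> nat_span G \<Longrightarrow> y \<in> nat_span G \<Longrightarrow> x + y \<in> nat_span G"
  by (induction x rule: nat_span.induct) (auto simp: add.assoc intro: nat_span.add_gen)

lemma nat_span_subset:
  assumes "G \<subseteq> M" "0 \<in> M" "\<And>x y. x \<in> M \<Longrightarrow> y \<in> M \<Longrightarrow> x + y \<in> M"
  shows "nat_span G \<subseteq> M"
proof
  fix x assume "x \<in> nat_span G"
  then show "x \<in> M" by (induction x rule: nat_span.induct) (use assms in auto)
qed

lemma nat_comb_in_nat_span:
  assumes "finite F" "F \<subseteq> G"
  shows "((\<Sum>g\<in>F. int (c g) * fst g), (\<Sum>g\<in>F. int (c g) * snd g)) \<in> nat_span G"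
  using assms
proof (induction F rule: finite_induct)
  case empty
  then show ?case using nat_span.zero by (simp add: zero_prod_def)
next
  case (insert g F)
  have scaled: "(int k * fst g + fst x, int k * snd g + snd x) \<in> nat_span G"
    if "x \<in> nat_span G" for k x
    using that
  proof (induction k arbitrary: x)
    case (Suc k)
    have "(int (Suc k) * fst g + fst x, int (Suc k) * snd g + snd x) =
        (int k * fst g + fst (g + x), int k * snd g + snd (g + x))"
      by (simp add: algebra_simps)
    moreover have "g + x \<in> nat_span G"
      using Suc.prems insert.prems by (simp add: nat_span.add_gen)
    ultimately show ?case using Suc.IH by metis
  next
    case 0
    then show ?case by simp
  qed
  from insert have "((\<Sum>h\<in>F. int (c h) * fst h), (\<Sum>h\<in>F. int (c h) * snd h)) \<in> nat_span G"
    by simp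
  from scaled[OF this, of "c g"] insert.hyps show ?case by simp
qed

lemma nat_span_nat_comb:
  assumes "x \<in> nat_span G"
  shows "\<exists>F (c :: int \<times> int \<Rightarrow> nat). finite F \<and> F \<subseteq> G \<and>
      x = ((\<Sum>g\<in>F. int (c g) * fst g), (\<Sum>g\<in>F. int (c g) * snd g))"
  using assms
proof (induction x rule: nat_span.induct)
  case zero
  have "(0::int \<times> int) = ((\<Sum>g\<in>{}. int (c g) * fst g), (\<Sum>g\<in>{}. int (c g) * snd g))"
    for c :: "int \<times> int \<Rightarrow> nat"
    by (simp add: zero_prod_def)
  then show ?case by blast
next
  case (add_gen g x)
  then obtain F c where F: "finite F" "F \<subseteq> G"
    and x: "x = ((\<Sum>h\<in>F. int (c h) * fst h), (\<Sum>h\<in>F. int (c h) * snd h))" by blast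
  define c' where "c' h = (if h \<in> F then c h else 0) + (if h = g then 1 else 0)" for h
  have "(\<Sum>h\<in>insert g F. int (c' h) * f h) = f g + (\<Sum>h\<in>F. int (c h) * f h)"
    for f :: "int \<times> int \<Rightarrow> int"
  proof -
    have "int (c' h) * f h = (if h \<in> F then int (c h) * f h else 0) + (if h = g then f h else 0)" for h
      by (simp add: c'_def distrib_right)
    then have "(\<Sum>h\<in>insert g F. int (c' h) * f h) =
        (\<Sum>h\<in>insert g F. if h \<in> F then int (c h) * f h else 0) + (\<Sum>h\<in>insert g F. if h = g then f h else 0)"
      by (simp add: sum.distrib)
    also have "\<dots> = (\<Sum>h\<in>F. int (c h) * f h) + f g"
      using F(1) by (simp add: sum.If_cases Int_absorb1 Int_absorb2 subset_insertI)
    finally show ?thesis by simp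
  qed
  then have "g + x = ((\<Sum>h\<in>insert g F. int (c' h) * fst h), (\<Sum>h\<in>insert g F. int (c' h) * snd h))"
    by (simp add: x plus_prod_def)
  with F add_gen.hyps(1) show ?case by blast
qed

lemma generates_iff_subset_nat_span: "generates G M \<longleftrightarrow> M \<subseteq> nat_span G"
proof
  show "generates G M \<Longrightarrow> M \<subseteq> nat_span G"
    unfolding generates_def by (metis nat_comb_in_nat_span subsetI)
  show "M \<subseteq> nat_span G \<Longrightarrow> generates G M"
    unfolding generates_def using nat_span_nat_comb by (meson subsetD)
qed

definition irreducibles :: "(int \<times> int) set \<Rightarrow> (int \<times> int) set" where
  "irreducibles M = {x \<in> M. x \<noteq> 0 \<and> \<not> (\<exists>y z. y \<in> M \<and> z \<in> M \<and> y \<noteq> 0 \<and> z \<noteq> 0 \<and> x = y + z)}"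

lemma irreducibles_subset: "irreducibles M \<subseteq> M"
  by (auto simp: irreducibles_def)

lemma subset_nat_span_irreducibles:
  fixes height :: "int \<times> int \<Rightarrow> int"
  assumes pos: "\<And>x. x \<in> M \<Longrightarrow> x \<noteq> 0 \<Longrightarrow> height x > 0"
    and additive: "\<And>x y. height (x + y) = height x + height y"
  shows "M \<subseteq> nat_span (irreducibles M)"
proof
  fix x assume "x \<in> M"
  then show "x \<in> nat_span (irreducibles M)"
  proof (induction "nat (height x)" arbitrary: x rule: less_induct)
    case less
    show ?case
    proof (cases "x = 0 \<or> x \<in> irreducibles M")
      case True
      then show ?thesis using nat_span.zero nat_span.add_gen[of x _ 0] by auto
    next
      case False
      then obtain y z where yz: "y \<in> M" "z \<in> M" "y \<noteq> 0" "z \<noteq> 0" "x = y + z"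
        using less.prems unfolding irreducibles_def by blast
      then have "nat (height y) < nat (height x)" "nat (height z) < nat (height x)"
        using pos[of y] pos[of z] additive[of y z] by auto
      then show ?thesis using less.hyps yz nat_span_add by blast
    qed
  qed
qed

lemma irreducibles_subset_generators:
  assumes "G \<subseteq> M" "0 \<in> M" "\<And>x y. x \<in> M \<Longrightarrow> y \<in> M \<Longrightarrow> x + y \<in> M"
    and "generates G M"
  shows "irreducibles M \<subseteq> G"
proof
  fix x assume irr: "x \<in> irreducibles M"
  then have "x \<in> nat_span G"
    using assms(4) irreducibles_subset unfolding generates_iff_subset_nat_span by blast
  then show "x \<in> G" using irr
  proof (induction x rule: nat_span.induct)
    case (add_gen g x)
    have "g \<in> M" "x \<in> M" using add_gen.hyps nat_span_subset[OF assms(1-3)] assms(1) by auto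
    show ?case
    proof (cases "g = 0 \<or> x = 0")
      case True
      then show ?thesis using add_gen by auto
    next
      case False
      then show ?thesis using add_gen.prems \<open>g \<in> M\<close> \<open>x \<in> M\<close> unfolding irreducibles_def by blast
    qed
  qed (simp add: irreducibles_def)
qed

lemma hilbert_basis_eq_irreducibles:
  fixes height :: "int \<times> int \<Rightarrow> int"
  assumes add_closed: "\<And>x y. x \<in> M \<Longrightarrow> y \<in> M \<Longrightarrow> x + y \<in> M" and zero: "0 \<in> M"
    and pos: "\<And>x. x \<in> M \<Longrightarrow> x \<noteq> 0 \<Longrightarrow> height x > 0"
    and additive: "\<And>x y. height (x + y) = height x + height y"
  shows "hilbert_basis M = irreducibles M"
  unfolding hilbert_basis_def
proof (rule the_equality)
  have gen: "generates (irreducibles M) M"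
    unfolding generates_iff_subset_nat_span by (rule subset_nat_span_irreducibles[OF pos additive])
  have least: "irreducibles M \<subseteq> G" if "G \<subseteq> M" "generates G M" for G
    using irreducibles_subset_generators that add_closed zero by blast
  show "irreducibles M \<subseteq> M \<and> generates (irreducibles M) M \<and>
      (\<forall>G'. G' \<subset> irreducibles M \<longrightarrow> \<not> generates G' M)"
    using gen least irreducibles_subset by blast
  show "G = irreducibles M"
    if "G \<subseteq> M \<and> generates G M \<and> (\<forall>G'. G' \<subset> G \<longrightarrow> \<not> generates G' M)" for G
    using that gen least by blast
qed

section \<open>Sectors and rays in Z^2\<close>

definition det2 :: "int \<times> int \<Rightarrow> int \<times> int \<Rightarrow> int" where
  "det2 u v = fst u * snd v - snd u * fst v"

definition dot2 :: "int \<times> int \<Rightarrow> int \<times> int \<Rightarrow> int" where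
  "dot2 u v = fst u * fst v + snd u * snd v"

definition smul :: "int \<Rightarrow> int \<times> int \<Rightarrow> int \<times> int" where
  "smul k v = (k * fst v, k * snd v)"

definition primitive :: "int \<times> int \<Rightarrow> bool" where
  "primitive v \<longleftrightarrow> coprime (fst v) (snd v)"

lemma det2_add_left: "det2 (u + v) x = det2 u x + det2 v x"
  and det2_add_right: "det2 x (u + v) = det2 x u + det2 x v"
  and det2_diff_left: "det2 (u - v) x = det2 u x - det2 v x"
  and det2_diff_right: "det2 x (u - v) = det2 x u - det2 x v"
  and det2_minus_left: "det2 (- u) x = - det2 u x"
  and det2_minus_right: "det2 x (- u) = - det2 x u"
  and det2_smul_left: "det2 (smul k u) x = k * det2 u x"
  and det2_smul_right: "det2 x (smul k u) = k * det2 x u"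
  and det2_self: "det2 u u = 0"
  and det2_zero_left: "det2 0 u = 0"
  and det2_zero_right: "det2 u 0 = 0"
  and det2_swap: "det2 v u = - det2 u v"
  by (simp_all add: det2_def smul_def algebra_simps)

lemmas det2_simps = det2_add_left det2_add_right det2_diff_left det2_diff_right
  det2_minus_left det2_minus_right det2_smul_left det2_smul_right det2_self
  det2_zero_left det2_zero_right

lemma smul_eq_0_iff: "smul k v = 0 \<longleftrightarrow> k = 0 \<or> v = 0"
  by (auto simp: smul_def zero_prod_def prod_eq_iff)

lemma dot2_self_pos: "v \<noteq> 0 \<Longrightarrow> dot2 v v > 0"
  by (auto simp: dot2_def sum_squares_gt_zero_iff prod_eq_iff)

lemma primitive_nonzero: "primitive v \<Longrightarrow> v \<noteq> 0"
  by (auto simp: primitive_def zero_prod_def)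

lemma primitive_uminus: "primitive (- v) \<longleftrightarrow> primitive v"
  by (simp add: primitive_def)

lemma det2_cramer:
  "det2 y z * fst x = det2 x z * fst y + det2 y x * fst z"
  "det2 y z * snd x = det2 x z * snd y + det2 y x * snd z"
  by (simp_all add: det2_def algebra_simps)

lemma det2_pluecker:
  "det2 y z * det2 a x = det2 x z * det2 a y + det2 y x * det2 a z"
  "det2 y z * det2 x a = det2 x z * det2 y a + det2 y x * det2 z a"
  by (simp_all add: det2_def algebra_simps)

lemma det2_eq_0_imp_eq_0:
  assumes "det2 a c \<noteq> 0" "det2 a x = 0" "det2 x c = 0"
  shows "x = 0"
proof -
  have "det2 a c * fst x = 0" "det2 a c * snd x = 0"
    using det2_cramer[of a c x] assms by simp_all
  then show ?thesis using assms(1) by (simp add: prod_eq_iff)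
qed

lemma det2_dot2_eq_0_imp_eq_0:
  assumes "a \<noteq> 0" "det2 a x = 0" "dot2 a x = 0"
  shows "x = 0"
proof -
  have "dot2 a a * fst x = dot2 a x * fst a - snd a * det2 a x"
    "dot2 a a * snd x = dot2 a x * snd a + fst a * det2 a x"
    by (simp_all add: det2_def dot2_def algebra_simps)
  then show ?thesis using assms dot2_self_pos[of a] by (simp add: prod_eq_iff)
qed

lemma det2_eq_0_obtains_smul:
  assumes "primitive v" "det2 y v = 0"
  obtains k where "y = smul k v"
proof -
  obtain s t where st: "s * fst v + t * snd v = 1"
    using assms(1) unfolding primitive_def by (metis bezout_int coprime_iff_gcd_eq_1)
  have "fst y * snd v = snd y * fst v" using assms(2) by (simp add: det2_def)
  then have "fst y * (s * fst v + t * snd v) = (s * fst y + t * snd y) * fst v"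
    "snd y * (s * fst v + t * snd v) = (s * fst y + t * snd y) * snd v"
    by (simp_all add: algebra_simps)
  then have "y = smul (s * fst y + t * snd y) v" using st by (simp add: smul_def prod_eq_iff)
  then show thesis by (rule that)
qed

lemma primitive_smul_imp_unit:
  assumes "primitive (smul k v)"
  shows "\<bar>k\<bar> = 1"
proof -
  have "coprime k k" using assms by (simp add: primitive_def smul_def)
  then show ?thesis by simp
qed

lemma primitive_not_sum_of_multiples:
  assumes "primitive v" "v = smul k u + smul k' u" "k \<ge> 1" "k' \<ge> 1"
  shows False
proof -
  have "v = smul (k + k') u" using assms(2) by (simp add: smul_def prod_eq_iff algebra_simps)
  then show False using assms primitive_smul_imp_unit[of "k + k'" u] by auto
qed

lemma primitive_eq_if_same_direction:
  assumes "primitive u" "primitive v" "det2 u v = 0" "dot2 u v > 0"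
  shows "u = v"
proof -
  obtain k where k: "u = smul k v" using det2_eq_0_obtains_smul[OF assms(2,3)] by blast
  have "k * dot2 v v > 0" using assms(4) k by (simp add: smul_def dot2_def algebra_simps)
  then have "k > 0"
    using dot2_self_pos[OF primitive_nonzero[OF assms(2)]] by (simp add: zero_less_mult_iff)
  moreover have "\<bar>k\<bar> = 1" using assms(1) k primitive_smul_imp_unit by blast
  ultimately show ?thesis using k by (simp add: smul_def)
qed

lemma between_zero_if_fraction:
  fixes L Y x t :: int
  assumes "0 < L" "0 \<le> Y" "Y \<le> L" "L * x = Y * t"
  shows "min 0 t \<le> x \<and> x \<le> max 0 t"
proof (cases "t \<ge> 0")
  case True
  then have "L * 0 \<le> L * x" "L * x \<le> L * t" using assms by (simp_all add: mult_right_mono)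
  then show ?thesis using assms(1) True by (simp add: mult_le_cancel_left_pos zero_le_mult_iff)
next
  case False
  then have "L * x \<le> L * 0" "L * t \<le> L * x"
    using assms by (simp_all add: mult_nonneg_nonpos mult_right_mono_neg)
  then show ?thesis using assms(1) False by (simp add: mult_le_cancel_left_pos mult_le_0_iff)
qed

definition in_sector :: "int \<times> int \<Rightarrow> int \<times> int \<Rightarrow> int \<times> int \<Rightarrow> bool" where
  "in_sector a c x \<longleftrightarrow> det2 a x \<ge> 0 \<and> det2 x c \<ge> 0"

definition sector_irreducible :: "int \<times> int \<Rightarrow> int \<times> int \<Rightarrow> int \<times> int \<Rightarrow> bool" where
  "sector_irreducible a c v \<longleftrightarrow>
     \<not> (\<exists>p q. in_sector a c p \<and> in_sector a c q \<and> p \<noteq> 0 \<and> q \<noteq> 0 \<and> v = p + q)"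

definition in_ray :: "int \<times> int \<Rightarrow> int \<times> int \<Rightarrow> bool" where
  "in_ray a x \<longleftrightarrow> det2 a x = 0 \<and> dot2 a x \<ge> 0"

lemma in_sector_subsector:
  assumes "det2 p q > 0" "in_sector y z p" "in_sector y z q" "in_sector p q x"
  shows "in_sector y z x"
proof -
  have "det2 p q * det2 y x \<ge> 0"
    using det2_pluecker(1)[of p q y x] assms by (simp add: in_sector_def)
  moreover have "det2 p q * det2 x z \<ge> 0"
    using det2_pluecker(2)[of p q x z] assms by (simp add: in_sector_def)
  ultimately
  show ?thesis using assms(1) by (simp add: in_sector_def zero_le_mult_iff)
qed

lemma sector_irreducible_subsector:
  assumes "det2 p q > 0" "in_sector y z p" "in_sector y z q" "sector_irreducible y z v"
  shows "sector_irreducible p q v"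
  using assms in_sector_subsector[OF assms(1-3)] unfolding sector_irreducible_def by blast

lemma nonneg_combination_eq_0:
  fixes a b c d :: int
  assumes "a > 0" "c > 0" "b \<ge> 0" "d \<ge> 0" "a * b + c * d \<le> 0"
  shows "b = 0" "d = 0"
proof -
  have "a * b \<ge> 0" "c * d \<ge> 0" using assms by simp_all
  then have "a * b = 0" "c * d = 0" using assms(5) by linarith+
  then show "b = 0" "d = 0" using assms(1,2) by simp_all
qed

lemma open_subsector:
  assumes pq: "det2 p q > 0" "in_sector y z p" "in_sector y z q"
    and x: "det2 p x > 0" "det2 x q > 0" and "y \<noteq> 0" "z \<noteq> 0"
  shows "det2 y x > 0 \<and> det2 x z > 0"
proof -
  have nonneg: "det2 y p \<ge> 0" "det2 y q \<ge> 0" "det2 p z \<ge> 0" "det2 q z \<ge> 0"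
    using pq by (auto simp: in_sector_def)
  have "det2 y x > 0"
  proof (rule ccontr)
    assume "\<not> det2 y x > 0"
    then have "det2 p q * det2 y x \<le> 0" using pq(1) by (simp add: mult_nonneg_nonpos)
    then have "det2 x q * det2 y p + det2 p x * det2 y q \<le> 0"
      using det2_pluecker(1)[of p q y x] by linarith
    then have "det2 y p = 0" "det2 y q = 0"
      using nonneg_combination_eq_0 x nonneg by blast+
    then show False
      using det2_eq_0_imp_eq_0[of p q y] pq(1) \<open>y \<noteq> 0\<close> by (simp add: det2_swap[of p y])
  qed
  moreover have "det2 x z > 0"
  proof (rule ccontr)
    assume "\<not> det2 x z > 0"
    then have "det2 p q * det2 x z \<le> 0" using pq(1) by (simp add: mult_nonneg_nonpos)
    then have "det2 x q * det2 p z + det2 p x * det2 q z \<le> 0"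
      using det2_pluecker(2)[of p q x z] by linarith
    then have "det2 p z = 0" "det2 q z = 0"
      using nonneg_combination_eq_0 x nonneg by blast+
    then show False
      using det2_eq_0_imp_eq_0[of p q z] pq(1) \<open>z \<noteq> 0\<close> by (simp add: det2_swap[of q z])
  qed
  ultimately show ?thesis by simp
qed

lemma in_sector_smul_neg:
  assumes "det2 a c > 0" "in_sector a c v" "in_sector a c (smul k v)" "k < 0"
  shows "v = 0"
proof -
  have "k * det2 a v \<ge> 0" "k * det2 v c \<ge> 0"
    using assms(3) by (auto simp: in_sector_def det2_simps)
  then have "det2 a v = 0" "det2 v c = 0"
    using assms(2,4) by (auto simp: in_sector_def zero_le_mult_iff)
  then show ?thesis using det2_eq_0_imp_eq_0[of a c v] assms(1) by simp
qed

lemma sector_irreducible_start: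
  assumes ac: "det2 a c > 0" and "primitive a"
  shows "sector_irreducible a c a"
  unfolding sector_irreducible_def
proof (intro notI, elim exE conjE)
  fix p q assume pq: "in_sector a c p" "in_sector a c q" "p \<noteq> 0" "q \<noteq> 0" "a = p + q"
  have "det2 a p + det2 a q = 0" using pq(5) det2_self[of a] by (simp add: det2_add_right)
  then have "det2 p a = 0" "det2 q a = 0"
    using pq(1,2) det2_swap[of p a] det2_swap[of q a] by (auto simp: in_sector_def)
  then obtain k k' where k: "p = smul k a" "q = smul k' a"
    by (elim det2_eq_0_obtains_smul[OF \<open>primitive a\<close>]) blast
  have "k * det2 a c \<ge> 0" "k' * det2 a c \<ge> 0"
    using pq(1,2) k by (auto simp: in_sector_def det2_smul_left)
  then have "k \<ge> 0" "k' \<ge> 0" using ac by (simp_all add: zero_le_mult_iff)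
  moreover have "k \<noteq> 0" "k' \<noteq> 0" using pq(3,4) k smul_eq_0_iff by auto
  ultimately show False
    using primitive_not_sum_of_multiples[OF \<open>primitive a\<close> pq(5)[unfolded k]] by auto
qed

lemma primitive_ray_irreducible:
  assumes "primitive a" "primitive v" "in_ray a p" "in_ray a q" "p \<noteq> 0" "q \<noteq> 0"
  shows "v \<noteq> p + q"
proof
  assume sum: "v = p + q"
  have "det2 p a = 0" "det2 q a = 0"
    using assms(3,4) det2_swap[of p a] det2_swap[of q a] by (auto simp: in_ray_def)
  then obtain k k' where k: "p = smul k a" "q = smul k' a"
    by (elim det2_eq_0_obtains_smul[OF \<open>primitive a\<close>]) blast
  have "k * dot2 a a \<ge> 0" "k' * dot2 a a \<ge> 0"
    using assms(3,4) k by (auto simp: in_ray_def smul_def dot2_def algebra_simps)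
  then have "k \<ge> 0" "k' \<ge> 0"
    using dot2_self_pos[OF primitive_nonzero[OF assms(1)]] by (simp_all add: zero_le_mult_iff)
  moreover have "k \<noteq> 0" "k' \<noteq> 0" using assms(5,6) k smul_eq_0_iff by auto
  ultimately show False
    using primitive_not_sum_of_multiples[OF assms(2), of k a k'] sum k by auto
qed

lemma cone_monoid_sector:
  assumes ac: "det2 a c > 0"
  shows "x \<in> cone_monoid a c \<longleftrightarrow> in_sector a c x"
proof
  assume "x \<in> cone_monoid a c"
  then obtain s t :: real where st: "s \<ge> 0" "t \<ge> 0"
    "of_int (fst x) = s * of_int (fst a) + t * of_int (fst c)"
    "of_int (snd x) = s * of_int (snd a) + t * of_int (snd c)"
    unfolding cone_monoid_def by blast
  have "real_of_int (det2 a x) = t * real_of_int (det2 a c)"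
    "real_of_int (det2 x c) = s * real_of_int (det2 a c)"
    unfolding det2_def using st by (simp_all add: algebra_simps)
  then have "real_of_int (det2 a x) \<ge> 0" "real_of_int (det2 x c) \<ge> 0"
    using st ac by simp_all
  then show "in_sector a c x" unfolding in_sector_def by simp
next
  assume x: "in_sector a c x"
  define D where "D = real_of_int (det2 a c)"
  have D: "D > 0" using ac D_def by simp
  define s where "s = real_of_int (det2 x c) / D"
  define t where "t = real_of_int (det2 a x) / D"
  have "s \<ge> 0" "t \<ge> 0" using x D unfolding s_def t_def in_sector_def by auto
  moreover have "D * of_int (fst x) = of_int (det2 x c) * of_int (fst a) + of_int (det2 a x) * of_int (fst c)"
    "D * of_int (snd x) = of_int (det2 x c) * of_int (snd a) + of_int (det2 a x) * of_int (snd c)"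
    unfolding D_def using arg_cong[OF det2_cramer(1)[of a c x], of real_of_int]
      arg_cong[OF det2_cramer(2)[of a c x], of real_of_int] by simp_all
  then have "of_int (fst x) = s * of_int (fst a) + t * of_int (fst c)"
    "of_int (snd x) = s * of_int (snd a) + t * of_int (snd c)"
    using D unfolding s_def t_def by (simp_all add: field_simps)
  ultimately show "x \<in> cone_monoid a c" unfolding cone_monoid_def by blast
qed

lemma cone_monoid_ray:
  assumes a: "a \<noteq> 0"
  shows "x \<in> cone_monoid a a \<longleftrightarrow> in_ray a x"
proof
  assume "x \<in> cone_monoid a a"
  then obtain s t :: real where st: "s \<ge> 0" "t \<ge> 0"
    "of_int (fst x) = s * of_int (fst a) + t * of_int (fst a)"
    "of_int (snd x) = s * of_int (snd a) + t * of_int (snd a)"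
    unfolding cone_monoid_def by blast
  have "real_of_int (det2 a x) = 0"
    "real_of_int (dot2 a x) = (s + t) * (of_int (fst a) ^ 2 + of_int (snd a) ^ 2)"
    unfolding det2_def dot2_def using st by (simp_all add: algebra_simps power2_eq_square)
  moreover have "(s + t) * (of_int (fst a) ^ 2 + of_int (snd a) ^ 2) \<ge> (0::real)"
    using st by simp
  ultimately show "in_ray a x" unfolding in_ray_def by linarith
next
  assume r: "in_ray a x"
  define N where "N = real_of_int (dot2 a a)"
  have N: "N > 0" unfolding N_def using dot2_self_pos[OF a] by simp
  define s where "s = real_of_int (dot2 a x) / N"
  have s: "s \<ge> 0" using r N unfolding s_def in_ray_def by simp
  have "dot2 a a * fst x = dot2 a x * fst a" "dot2 a a * snd x = dot2 a x * snd a"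
    using r unfolding in_ray_def det2_def dot2_def by (simp_all add: algebra_simps)
  then have "N * of_int (fst x) = of_int (dot2 a x) * of_int (fst a)"
    "N * of_int (snd x) = of_int (dot2 a x) * of_int (snd a)"
    unfolding N_def by (metis of_int_mult)+
  then have "of_int (fst x) = s * of_int (fst a) + 0 * of_int (fst a)"
    "of_int (snd x) = s * of_int (snd a) + 0 * of_int (snd a)"
    using N unfolding s_def by (simp_all add: field_simps)
  then show "x \<in> cone_monoid a a" unfolding cone_monoid_def using s by fastforce
qed

lemma irreducibles_sector:
  assumes "det2 a c > 0"
  shows "x \<in> irreducibles (cone_monoid a c) \<longleftrightarrow> in_sector a c x \<and> x \<noteq> 0 \<and> sector_irreducible a c x"
  unfolding irreducibles_def sector_irreducible_def mem_Collect_eq cone_monoid_sector[OF assms]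
  by (rule refl)

lemma irreducibles_ray:
  assumes "a \<noteq> 0"
  shows "x \<in> irreducibles (cone_monoid a a) \<longleftrightarrow> in_ray a x \<and> x \<noteq> 0 \<and>
     \<not> (\<exists>p q. in_ray a p \<and> in_ray a q \<and> p \<noteq> 0 \<and> q \<noteq> 0 \<and> x = p + q)"
  unfolding irreducibles_def mem_Collect_eq cone_monoid_ray[OF assms] by (rule refl)

lemma hilbert_basis_sector:
  assumes ac: "det2 a c > 0"
  shows "hilbert_basis (cone_monoid a c) = irreducibles (cone_monoid a c)"
proof (rule hilbert_basis_eq_irreducibles[where height = "\<lambda>x. det2 a x + det2 x c"])
  show "x + y \<in> cone_monoid a c" if "x \<in> cone_monoid a c" "y \<in> cone_monoid a c" for x y
    using that unfolding cone_monoid_sector[OF ac] in_sector_def by (simp add: det2_simps)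
  show "0 < det2 a x + det2 x c" if "x \<in> cone_monoid a c" "x \<noteq> 0" for x
    using that det2_eq_0_imp_eq_0[of a c x] ac
    unfolding cone_monoid_sector[OF ac] in_sector_def by linarith
  show "0 \<in> cone_monoid a c"
    by (simp add: cone_monoid_sector[OF ac] in_sector_def det2_simps)
  show "det2 a (x + y) + det2 (x + y) c = det2 a x + det2 x c + (det2 a y + det2 y c)" for x y
    by (simp add: det2_simps)
qed

lemma hilbert_basis_ray:
  assumes a: "a \<noteq> 0"
  shows "hilbert_basis (cone_monoid a a) = irreducibles (cone_monoid a a)"
proof (rule hilbert_basis_eq_irreducibles[where height = "dot2 a"])
  show "x + y \<in> cone_monoid a a" if "x \<in> cone_monoid a a" "y \<in> cone_monoid a a" for x y
    using that unfolding cone_monoid_ray[OF a] in_ray_def by (simp add: det2_simps dot2_def algebra_simps)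
  show "0 < dot2 a x" if "x \<in> cone_monoid a a" "x \<noteq> 0" for x
    using that det2_dot2_eq_0_imp_eq_0[OF a, of x] unfolding cone_monoid_ray[OF a] in_ray_def by linarith
  show "0 \<in> cone_monoid a a"
    by (simp add: cone_monoid_ray[OF a] in_ray_def det2_simps dot2_def)
  show "dot2 a (x + y) = dot2 a x + dot2 a y" for x y
    by (simp add: dot2_def algebra_simps)
qed

section \<open>Graver and indispensable elements in Gale coordinates\<close>

locale gale_config =
  fixes n :: nat and w :: "nat \<Rightarrow> int \<times> int"
  assumes primitive_gale: "\<And>j. j < n \<Longrightarrow> primitive (w j)"
    and not_in_half_plane: "\<And>l. l \<noteq> 0 \<Longrightarrow> \<exists>j<n. det2 l (w j) < 0"
begin

definition conformal_part :: "int \<times> int \<Rightarrow> int \<times> int \<Rightarrow> bool" where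
  "conformal_part l y \<longleftrightarrow>
     (\<forall>j<n. min 0 (det2 l (w j)) \<le> det2 y (w j) \<and> det2 y (w j) \<le> max 0 (det2 l (w j)))"

definition graver :: "int \<times> int \<Rightarrow> bool" where
  "graver l \<longleftrightarrow> l \<noteq> 0 \<and> (\<forall>y. conformal_part l y \<longrightarrow> y = 0 \<or> y = l)"

text \<open>In kernel coordinates: l^+ - y is nonnegative, i.e. a point of the fiber of l^+.\<close>

definition in_pos_fiber :: "int \<times> int \<Rightarrow> int \<times> int \<Rightarrow> bool" where
  "in_pos_fiber l y \<longleftrightarrow> (\<forall>j<n. det2 y (w j) \<le> max 0 (det2 l (w j)))"

definition indispensable :: "int \<times> int \<Rightarrow> bool" where
  "indispensable l \<longleftrightarrow> (\<forall>y. in_pos_fiber l y \<longrightarrow> y = 0 \<or> y = l)"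

definition gale_free :: "int \<times> int \<Rightarrow> int \<times> int \<Rightarrow> bool" where
  "gale_free y z \<longleftrightarrow> (\<forall>j<n. \<not> (det2 y (w j) > 0 \<and> det2 (w j) z > 0))"

lemma not_in_half_plane': "l \<noteq> 0 \<Longrightarrow> \<exists>j<n. det2 l (w j) > 0"
  using not_in_half_plane[of "- l"] by (auto simp: det2_minus_left)

lemma gale_nonzero: "j < n \<Longrightarrow> w j \<noteq> 0"
  using primitive_gale primitive_nonzero by blast

lemma graver_gale:
  assumes i: "i < n"
  shows "graver (w i)"
  unfolding graver_def
proof (intro conjI allI impI)
  show "w i \<noteq> 0" using gale_nonzero i .
  fix y assume conf: "conformal_part (w i) y"
  then have "det2 y (w i) = 0" using i by (auto simp: conformal_part_def det2_self)
  then obtain k where k: "y = smul k (w i)" using det2_eq_0_obtains_smul primitive_gale i by blast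
  obtain j where j: "j < n" "det2 (w i) (w j) > 0" using not_in_half_plane' gale_nonzero i by blast
  have "0 \<le> k * det2 (w i) (w j)" "k * det2 (w i) (w j) \<le> 1 * det2 (w i) (w j)"
    using conf j k by (auto simp: conformal_part_def det2_smul_left)
  then have "0 \<le> k" "k \<le> 1" using j(2) by (simp_all add: zero_le_mult_iff mult_le_cancel_right)
  then have "k = 0 \<or> k = 1" by auto
  then show "y = 0 \<or> y = w i" using k by (auto simp: smul_def zero_prod_def)
qed

lemma graver_uminus: "graver l \<Longrightarrow> graver (- l)"
  unfolding graver_def
proof (intro conjI allI impI)
  assume l: "l \<noteq> 0 \<and> (\<forall>y. conformal_part l y \<longrightarrow> y = 0 \<or> y = l)"
  then show "- l \<noteq> 0" by simp
  fix y assume "conformal_part (- l) y"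
  then have "conformal_part l (- y)" by (auto simp: conformal_part_def det2_minus_left)
  then show "y = 0 \<or> y = - l" using l by (metis minus_equation_iff neg_equal_0_iff_equal)
qed

text \<open>The witness is -z, a point of the fiber of w_i^+ other than w_i^+ and w_i^-.\<close>

lemma neg_gale_split_imp_not_indispensable:
  assumes "det2 a c > 0" "gale_free a c" "i < n"
    and y: "in_sector a c y" "y \<noteq> 0" and z: "in_sector a c z" "z \<noteq> 0"
    and sum: "- w i = y + z" and yz: "det2 y z > 0"
  shows "\<not> indispensable (w i)"
proof -
  have wi: "w i = - (y + z)" using sum by (metis minus_minus)
  have a0: "a \<noteq> 0" "c \<noteq> 0" using assms(1) by (auto simp: det2_zero_left det2_zero_right)
  have "in_pos_fiber (w i) (- z)"
    unfolding in_pos_fiber_def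
  proof (intro allI impI)
    fix j assume j: "j < n"
    show "det2 (- z) (w j) \<le> max 0 (det2 (w i) (w j))"
    proof (rule ccontr)
      assume "\<not> ?thesis"
      then have "det2 y (w j) > 0" "det2 (w j) z > 0"
        unfolding wi by (auto simp: det2_simps det2_swap[of "w j" z])
      then have "det2 a (w j) > 0 \<and> det2 (w j) c > 0"
        using open_subsector[OF yz y(1) z(1) _ _ a0] by blast
      then show False using assms(2) j by (auto simp: gale_free_def)
    qed
  qed
  moreover have "- z \<noteq> 0" "- z \<noteq> w i" using y(2) z(2) sum by (auto simp: wi)
  ultimately show ?thesis unfolding indispensable_def by blast
qed

lemma neg_gale_sector_irreducible:
  assumes ac: "det2 a c > 0" and free: "gale_free a c" and i: "i < n"
    and indisp: "indispensable (w i)" and v: "in_sector a c (- w i)"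
  shows "sector_irreducible a c (- w i)"
  unfolding sector_irreducible_def
proof (intro notI, elim exE conjE)
  fix p q assume pq: "in_sector a c p" "in_sector a c q" "p \<noteq> 0" "q \<noteq> 0" "- w i = p + q"
  consider "det2 p q > 0" | "det2 q p > 0" | "det2 p q = 0" using det2_swap[of q p] by linarith
  then show False
  proof cases
    case 1
    then show ?thesis using neg_gale_split_imp_not_indispensable[OF ac free i pq(1,3,2,4,5)] indisp by blast
  next
    case 2
    have "- w i = q + p" using pq(5) by (simp add: add.commute)
    with 2 show ?thesis
      using neg_gale_split_imp_not_indispensable[OF ac free i pq(2,4,1,3)] indisp by blast
  next
    case 3
    have "det2 p (- w i) = 0" using 3 pq(5) by (simp add: det2_simps)
    then obtain k where k: "p = smul k (- w i)"
      using det2_eq_0_obtains_smul primitive_gale[OF i] primitive_uminus by blast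
    have q: "q = smul (1 - k) (- w i)"
      using k pq(5) by (simp add: smul_def prod_eq_iff algebra_simps)
    have "- w i \<noteq> 0" using gale_nonzero[OF i] by simp
    then have "\<not> k < 0" "\<not> 1 - k < 0"
      using pq(1,2) k q in_sector_smul_neg[OF ac v, of k] in_sector_smul_neg[OF ac v, of "1 - k"]
      by auto
    moreover have "k \<noteq> 0" "1 - k \<noteq> 0" using pq(3,4) k q smul_eq_0_iff by auto
    ultimately show False by linarith
  qed
qed

end

context gale_config
begin

definition inner_neg_gale_irreducible :: "int \<times> int \<Rightarrow> int \<times> int \<Rightarrow> bool" where
  "inner_neg_gale_irreducible y z \<longleftrightarrow>
     (\<forall>i<n. det2 y (- w i) > 0 \<and> det2 (- w i) z > 0 \<longrightarrow> sector_irreducible y z (- w i))"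

lemma gale_free_subsector:
  assumes pq: "det2 p q > 0" "in_sector y z p" "in_sector y z q" and "y \<noteq> 0" "z \<noteq> 0"
    and free: "gale_free y z" and irr: "inner_neg_gale_irreducible y z"
  shows "gale_free p q" "inner_neg_gale_irreducible p q"
proof -
  have inner: "det2 y x > 0 \<and> det2 x z > 0" if "det2 p x > 0" "det2 x q > 0" for x
    using open_subsector[OF pq that \<open>y \<noteq> 0\<close> \<open>z \<noteq> 0\<close>] .
  show "gale_free p q" using free inner unfolding gale_free_def by blast
  show "inner_neg_gale_irreducible p q"
    using irr inner sector_irreducible_subsector[OF pq] unfolding inner_neg_gale_irreducible_def by blast
qed

lemma conformal_part_if_no_inner_neg_gale:
  assumes "y + z = l" "gale_free y z" "\<not> (\<exists>i<n. det2 y (- w i) > 0 \<and> det2 (- w i) z > 0)"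
  shows "conformal_part l y"
  unfolding conformal_part_def
proof (intro allI impI)
  fix j assume j: "j < n"
  have "det2 l (w j) = det2 y (w j) + det2 z (w j)" using assms(1) by (auto simp: det2_add_left)
  moreover have "\<not> (det2 y (w j) > 0 \<and> det2 z (w j) < 0)"
    using assms(2) j det2_swap[of "w j" z] by (auto simp: gale_free_def)
  moreover have "\<not> (det2 y (w j) < 0 \<and> det2 z (w j) > 0)"
    using assms(3) j det2_swap[of "- w j" z] by (auto simp: det2_minus_left det2_minus_right)
  ultimately show "min 0 (det2 l (w j)) \<le> det2 y (w j) \<and> det2 y (w j) \<le> max 0 (det2 l (w j))"
    by linarith
qed

lemma sector_irreducible_inner_bounds:
  assumes "det2 y z > 0" "det2 y v > 0" "det2 v z > 0" "sector_irreducible y z v"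
  shows "det2 v z < det2 y z" "det2 y v < det2 y z"
proof -
  have ends: "in_sector y z y" "in_sector y z z" "y \<noteq> 0" "z \<noteq> 0"
    using assms(1) by (auto simp: in_sector_def det2_self det2_zero_left det2_zero_right)
  show "det2 v z < det2 y z"
  proof (rule ccontr)
    assume "\<not> ?thesis"
    then have "in_sector y z (v - y)" "v - y \<noteq> 0"
      using assms(2,3) det2_self[of y] by (auto simp: in_sector_def det2_simps)
    moreover have "v = y + (v - y)" by simp
    ultimately show False using assms(4) ends unfolding sector_irreducible_def by blast
  qed
  show "det2 y v < det2 y z"
  proof (rule ccontr)
    assume "\<not> ?thesis"
    then have "in_sector y z (v - z)" "v - z \<noteq> 0"
      using assms(2,3) det2_self[of z] by (auto simp: in_sector_def det2_simps)
    moreover have "v = (v - z) + z" by simp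
    ultimately show False using assms(4) ends unfolding sector_irreducible_def by blast
  qed
qed

lemma conformal_part_if_balanced:
  assumes "det2 y z > 0" "y + z = l" "det2 v z > 0" "det2 v z < det2 y z" "det2 v z = det2 y v"
  shows "conformal_part l v"
  unfolding conformal_part_def
proof (intro allI impI)
  fix j
  have "det2 y z * det2 v (w j) = det2 v z * det2 l (w j)"
    using det2_pluecker(2)[of y z v "w j"] assms(2,5) by (auto simp: det2_add_left algebra_simps)
  then show "min 0 (det2 l (w j)) \<le> det2 v (w j) \<and> det2 v (w j) \<le> max 0 (det2 l (w j))"
    using between_zero_if_fraction[of "det2 y z" "det2 v z"] assms(1,3,4) by simp
qed

text \<open>Descent on det2 y z: if some -w_i lies strictly between y and z, l splits again, with a
  smaller determinant, at -w_i; otherwise y is a conformal part of l.\<close>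

lemma graver_no_free_split:
  assumes "graver l"
  shows "det2 y z > 0 \<Longrightarrow> y + z = l \<Longrightarrow> gale_free y z \<Longrightarrow> inner_neg_gale_irreducible y z \<Longrightarrow> False"
proof (induction "nat (det2 y z)" arbitrary: y z rule: less_induct)
  case less
  note yz = less.prems(1) and sum = less.prems(2) and free = less.prems(3) and irr = less.prems(4)
  have "y \<noteq> 0" "z \<noteq> 0" using yz by (auto simp: det2_zero_left det2_zero_right)
  have graver: "\<And>u. conformal_part l u \<Longrightarrow> u = 0 \<or> u = l" using assms by (auto simp: graver_def)
  show False
  proof (cases "\<exists>i<n. det2 y (- w i) > 0 \<and> det2 (- w i) z > 0")
    case False
    then have "y = 0 \<or> y = l" using conformal_part_if_no_inner_neg_gale[OF sum free] graver by blast
    then show False using \<open>y \<noteq> 0\<close> \<open>z \<noteq> 0\<close> sum by auto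
  next
    case True
    then obtain i where i: "i < n" "det2 y (- w i) > 0" "det2 (- w i) z > 0" by blast
    define v where "v = - w i"
    have v: "det2 y v > 0" "det2 v z > 0" "sector_irreducible y z v"
      using i irr unfolding v_def inner_neg_gale_irreducible_def by auto
    note bounds = sector_irreducible_inner_bounds[OF yz v]
    have sectors: "in_sector y z v" "in_sector y z (l - v)"
      using v bounds sum[symmetric] by (auto simp: in_sector_def det2_simps)
    have "v \<noteq> 0" using gale_nonzero[OF i(1)] unfolding v_def by simp
    have "in_sector y z y" "in_sector y z z" using yz by (auto simp: in_sector_def det2_self)
    then have "v \<noteq> l"
      using v(3) sum \<open>y \<noteq> 0\<close> \<open>z \<noteq> 0\<close> unfolding sector_irreducible_def by blast
    have det_rest: "det2 v (l - v) = det2 v z - det2 y v"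
      using sum[symmetric] det2_swap[of v y] by (simp add: det2_simps)
    consider "det2 v z = det2 y v" | "det2 v z > det2 y v" | "det2 v z < det2 y v" by linarith
    then show False
    proof cases
      case 1
      then show False
        using conformal_part_if_balanced[OF yz sum v(2) bounds(1)] graver \<open>v \<noteq> 0\<close> \<open>v \<noteq> l\<close> by blast
    next
      case 2
      with det_rest have pos: "det2 v (l - v) > 0" by simp
      have "nat (det2 v (l - v)) < nat (det2 y z)" using det_rest bounds v by simp
      moreover have "gale_free v (l - v)" "inner_neg_gale_irreducible v (l - v)"
        using gale_free_subsector[OF pos sectors \<open>y \<noteq> 0\<close> \<open>z \<noteq> 0\<close> free irr] by auto
      ultimately show False using less.hyps[OF _ pos] by simp
    next
      case 3
      with det_rest have pos: "det2 (l - v) v > 0" using det2_swap[of "l - v" v] by simp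
      have "nat (det2 (l - v) v) < nat (det2 y z)"
        using det_rest bounds v det2_swap[of "l - v" v] by simp
      moreover have "gale_free (l - v) v" "inner_neg_gale_irreducible (l - v) v"
        using gale_free_subsector[OF pos sectors(2,1) \<open>y \<noteq> 0\<close> \<open>z \<noteq> 0\<close> free irr] by auto
      ultimately show False using less.hyps[OF _ pos] by simp
    qed
  qed
qed

lemma conformal_part_if_collinear:
  assumes "l \<noteq> 0" "in_pos_fiber l y" "det2 y l = 0"
  shows "conformal_part l y"
proof -
  define L Y where "L = dot2 l l" and "Y = dot2 l y"
  have L: "L > 0" using dot2_self_pos[OF assms(1)] unfolding L_def .
  have scaled: "L * det2 y x = Y * det2 l x" for x
  proof -
    have "dot2 l l * det2 y x = dot2 l y * det2 l x + det2 y l * dot2 l x"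
      by (simp add: det2_def dot2_def algebra_simps)
    then show ?thesis using assms(3) unfolding L_def Y_def by simp
  qed
  obtain j j' where j: "j < n" "det2 l (w j) < 0" and j': "j' < n" "det2 l (w j') > 0"
    using not_in_half_plane not_in_half_plane' assms(1) by metis
  have "L * det2 y (w j) \<le> 0" using assms(2) j L by (auto simp: in_pos_fiber_def mult_nonneg_nonpos)
  then have "Y \<ge> 0" using scaled[of "w j"] j(2) by (simp add: mult_le_0_iff)
  have "det2 y (w j') \<le> det2 l (w j')" using assms(2) j' by (auto simp: in_pos_fiber_def)
  then have "Y * det2 l (w j') \<le> L * det2 l (w j')"
    using scaled[of "w j'"] L by (metis mult_left_mono less_imp_le)
  then have "Y \<le> L" using j'(2) by simp
  show ?thesis
    unfolding conformal_part_def using between_zero_if_fraction[OF L \<open>Y \<ge> 0\<close> \<open>Y \<le> L\<close> scaled] by blast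
qed

lemma graver_indispensable_if_inner_neg_gale_irreducible:
  assumes irr: "\<And>y z. det2 y z > 0 \<Longrightarrow> gale_free y z \<Longrightarrow> inner_neg_gale_irreducible y z"
    and graver: "graver l"
  shows "indispensable l"
  unfolding indispensable_def
proof (intro allI impI)
  fix y assume fiber: "in_pos_fiber l y"
  have l: "l \<noteq> 0" using graver by (simp add: graver_def)
  have no_cross: "\<not> (det2 y (w j) > 0 \<and> det2 (l - y) (w j) < 0)" if "j < n" for j
    using fiber that by (auto simp: in_pos_fiber_def det2_diff_left)
  consider "det2 y (l - y) > 0" | "det2 (- (l - y)) (- y) > 0" | "det2 y l = 0"
    using det2_swap[of "l - y" y] by (fastforce simp: det2_simps)
  then show "y = 0 \<or> y = l"
  proof cases
    case 1
    have "gale_free y (l - y)"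
      using no_cross det2_swap[of "w _" "l - y"] unfolding gale_free_def by (metis neg_0_less_iff_less)
    then show ?thesis using graver_no_free_split[OF graver 1] irr 1 by auto
  next
    case 2
    have "gale_free (- (l - y)) (- y)"
      using no_cross det2_swap[of "w _" y] unfolding gale_free_def by (auto simp: det2_simps)
    moreover have "- (l - y) + - y = - l" by simp
    ultimately show ?thesis using graver_no_free_split[OF graver_uminus[OF graver] 2] irr 2 by blast
  next
    case 3
    then show ?thesis using conformal_part_if_collinear[OF l fiber] graver unfolding graver_def by blast
  qed
qed

end

section \<open>The angular order of the Gale vectors\<close>

definition ang :: "int \<times> int \<Rightarrow> real" where
  "ang u = Arg (to_complex u)"

lemma to_complex_nonzero: "u \<noteq> 0 \<Longrightarrow> to_complex u \<noteq> 0"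
  by (auto simp: to_complex_def complex_eq_iff prod_eq_iff)

lemma ang_bounds: "- pi < ang u" "ang u \<le> pi"
  using Arg_bounded unfolding ang_def by auto

lemma of_int_polar:
  "real_of_int (fst u) = cmod (to_complex u) * cos (ang u)"
  "real_of_int (snd u) = cmod (to_complex u) * sin (ang u)"
  using Re_rcis[of "cmod (to_complex u)" "ang u"] Im_rcis[of "cmod (to_complex u)" "ang u"]
  unfolding ang_def rcis_cmod_Arg by (simp_all add: to_complex_def)

lemma det2_eq_sin:
  "real_of_int (det2 u v) = cmod (to_complex u) * cmod (to_complex v) * sin (ang v - ang u)"
proof -
  have "real_of_int (det2 u v) = real_of_int (fst u) * real_of_int (snd v) - real_of_int (snd u) * real_of_int (fst v)"
    by (simp add: det2_def)
  also have "\<dots> = cmod (to_complex u) * cmod (to_complex v) * (sin (ang v) * cos (ang u) - cos (ang v) * sin (ang u))"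
    unfolding of_int_polar by (simp add: algebra_simps)
  finally show ?thesis by (simp add: sin_diff)
qed

lemma dot2_eq_cos:
  "real_of_int (dot2 u v) = cmod (to_complex u) * cmod (to_complex v) * cos (ang v - ang u)"
proof -
  have "real_of_int (dot2 u v) = real_of_int (fst u) * real_of_int (fst v) + real_of_int (snd u) * real_of_int (snd v)"
    by (simp add: dot2_def)
  also have "\<dots> = cmod (to_complex u) * cmod (to_complex v) * (cos (ang v) * cos (ang u) + sin (ang v) * sin (ang u))"
    unfolding of_int_polar by (simp add: algebra_simps)
  finally show ?thesis by (simp add: cos_diff)
qed

lemma det2_pos_iff_sin:
  assumes "u \<noteq> 0" "v \<noteq> 0"
  shows "det2 u v > 0 \<longleftrightarrow> sin (ang v - ang u) > 0"
proof -
  have p: "cmod (to_complex u) * cmod (to_complex v) > 0" using assms to_complex_nonzero by simp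
  have "det2 u v > 0 \<longleftrightarrow> real_of_int (det2 u v) > 0" by simp
  also have "\<dots> \<longleftrightarrow> sin (ang v - ang u) > 0"
    unfolding det2_eq_sin using mult_less_cancel_left_pos[OF p, of 0] by simp
  finally show ?thesis .
qed

lemma det2_nonneg_iff_sin:
  assumes "u \<noteq> 0" "v \<noteq> 0"
  shows "det2 u v \<ge> 0 \<longleftrightarrow> sin (ang v - ang u) \<ge> 0"
proof -
  have p: "cmod (to_complex u) * cmod (to_complex v) > 0" using assms to_complex_nonzero by simp
  have "det2 u v \<ge> 0 \<longleftrightarrow> real_of_int (det2 u v) \<ge> 0" by simp
  also have "\<dots> \<longleftrightarrow> sin (ang v - ang u) \<ge> 0"
    unfolding det2_eq_sin using mult_le_cancel_left_pos[OF p, of 0] by simp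
  finally show ?thesis .
qed

lemma same_ang_imp:
  assumes "u \<noteq> 0" "v \<noteq> 0" "ang u = ang v"
  shows "det2 u v = 0" "dot2 u v > 0"
proof -
  have "cmod (to_complex u) * cmod (to_complex v) > 0" using assms to_complex_nonzero by simp
  then show "det2 u v = 0" "dot2 u v > 0"
    using det2_eq_sin[of u v] dot2_eq_cos[of u v] assms(3) by simp_all
qed

lemma sin_pos_nonpos_imp_less: "- 2 * pi < x \<Longrightarrow> x \<le> 0 \<Longrightarrow> sin x > 0 \<Longrightarrow> x < - pi"
proof (rule ccontr)
  assume x: "- 2 * pi < x" "x \<le> 0" "sin x > 0" "\<not> x < - pi"
  then have "x \<noteq> 0" by auto
  then have "sin (x + 2 * pi) \<le> 0" using x by (intro sin_le_zero) auto
  then show False using x by simp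
qed

lemma sin_pos_nonneg_imp_less: "0 \<le> x \<Longrightarrow> x < 2 * pi \<Longrightarrow> sin x > 0 \<Longrightarrow> x < pi"
  using sin_le_zero[of x] by (cases "x < pi") auto

lemma sin_gt_zero_neg: "- 2 * pi < x \<Longrightarrow> x < - pi \<Longrightarrow> sin x > 0"
  using sin_gt_zero[of "x + 2 * pi"] by simp

lemma sin_ge_zero_neg: "- 2 * pi \<le> x \<Longrightarrow> x \<le> - pi \<Longrightarrow> sin x \<ge> 0"
  using sin_ge_zero[of "x + 2 * pi"] by simp

locale ccw_gale_config = gale_config +
  fixes \<sigma> :: "nat \<Rightarrow> nat"
  assumes ccw: "ccw_order n w \<sigma>" and two_le_n: "n \<ge> 2"
begin

definition ray :: "nat \<Rightarrow> int \<times> int" where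
  "ray k = w (\<sigma> k)"

definition next_ray :: "nat \<Rightarrow> int \<times> int" where
  "next_ray k = w (\<sigma> ((k + 1) mod n))"

definition ray_angle :: "nat \<Rightarrow> real" where
  "ray_angle k = ang (ray k)"

lemma \<sigma>_less: "k < n \<Longrightarrow> \<sigma> k < n"
  using ccw unfolding ccw_order_def bij_betw_def by auto

lemma \<sigma>_surj: "j < n \<Longrightarrow> \<exists>k<n. \<sigma> k = j"
  using ccw unfolding ccw_order_def bij_betw_def by (metis imageE lessThan_iff)

lemma ray_angle_mono: "i \<le> k \<Longrightarrow> k < n \<Longrightarrow> ray_angle i \<le> ray_angle k"
  using ccw unfolding ccw_order_def ray_angle_def ray_def ang_def by blast

lemma ray_angle_bounds: "- pi < ray_angle k" "ray_angle k \<le> pi"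
  unfolding ray_angle_def using ang_bounds by auto

lemma ray_nonzero: "k < n \<Longrightarrow> ray k \<noteq> 0"
  unfolding ray_def using gale_nonzero \<sigma>_less by blast

lemma primitive_ray: "k < n \<Longrightarrow> primitive (ray k)"
  unfolding ray_def using primitive_gale \<sigma>_less by blast

lemma primitive_next_ray: "k < n \<Longrightarrow> primitive (next_ray k)"
  unfolding next_ray_def using primitive_gale \<sigma>_less two_le_n by simp

lemma next_ray_eq: "k + 1 < n \<Longrightarrow> next_ray k = ray (k + 1)"
  unfolding next_ray_def ray_def by simp

lemma next_ray_last: "k + 1 = n \<Longrightarrow> next_ray k = ray 0"
  unfolding next_ray_def ray_def by simp

lemma gale_eq_ray: "j < n \<Longrightarrow> \<exists>m<n. w j = ray m"
  using \<sigma>_surj unfolding ray_def by metis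

lemma gale_free_consecutive:
  assumes k: "k < n"
  shows "gale_free (ray k) (next_ray k)"
  unfolding gale_free_def
proof (intro allI impI notI)
  fix j assume j: "j < n" and inside: "0 < det2 (ray k) (w j) \<and> 0 < det2 (w j) (next_ray k)"
  obtain m where m: "m < n" "w j = ray m" using gale_eq_ray[OF j] by blast
  have after: "sin (ray_angle m - ray_angle k) > 0"
    using inside det2_pos_iff_sin[OF ray_nonzero[OF k] ray_nonzero[OF m(1)]] m(2)
    unfolding ray_angle_def by simp
  have bounds: "- pi < ray_angle m" "ray_angle m \<le> pi" "- pi < ray_angle k" "ray_angle k \<le> pi"
    "- pi < ray_angle (k + 1)" "ray_angle (k + 1) \<le> pi" "- pi < ray_angle 0" "ray_angle 0 \<le> pi"
    using ray_angle_bounds by auto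
  show False
  proof (cases "k + 1 < n")
    case True
    have before: "sin (ray_angle (k + 1) - ray_angle m) > 0"
      using inside det2_pos_iff_sin[OF ray_nonzero[OF m(1)] ray_nonzero[OF True]] m(2) next_ray_eq[OF True]
      unfolding ray_angle_def by simp
    have "ray_angle k \<le> ray_angle (k + 1)" using ray_angle_mono True by simp
    moreover have "ray_angle m \<le> ray_angle k \<or> ray_angle (k + 1) \<le> ray_angle m"
      using ray_angle_mono m(1) k by (cases "m \<le> k") auto
    ultimately show False
      using sin_pos_nonpos_imp_less[of "ray_angle m - ray_angle k"] sin_lt_zero[of "ray_angle (k + 1) - ray_angle m"]
        sin_pos_nonpos_imp_less[of "ray_angle (k + 1) - ray_angle m"] sin_lt_zero[of "ray_angle m - ray_angle k"]
        after before bounds by fastforce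
  next
    case False
    then have last: "k + 1 = n" using k by simp
    have before: "sin (ray_angle 0 - ray_angle m) > 0"
      using inside det2_pos_iff_sin[OF ray_nonzero[OF m(1)] ray_nonzero[of 0]] m(2) next_ray_last[OF last] two_le_n
      unfolding ray_angle_def by simp
    have "ray_angle 0 \<le> ray_angle m" "ray_angle m \<le> ray_angle k" using ray_angle_mono m(1) last by auto
    then show False
      using sin_pos_nonpos_imp_less[of "ray_angle m - ray_angle k"] sin_pos_nonpos_imp_less[of "ray_angle 0 - ray_angle m"]
        after before bounds by auto
  qed
qed

lemma rays_not_in_half_plane:
  assumes "u \<noteq> 0" "\<And>m. m < n \<Longrightarrow> det2 u (ray m) \<ge> 0"
  shows False
  using not_in_half_plane[OF assms(1)] assms(2) gale_eq_ray by force

lemma last_cone_proper: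
  assumes last: "k + 1 = n"
  shows "det2 (ray k) (next_ray k) > 0"
proof -
  have k: "k < n" using last by simp
  have bounds: "- pi < ray_angle 0" "ray_angle 0 \<le> pi" "- pi < ray_angle k" "ray_angle k \<le> pi"
    using ray_angle_bounds by auto
  show ?thesis
  proof (cases "ray_angle 0 - ray_angle k < - pi")
    case True
    then have "sin (ray_angle 0 - ray_angle k) > 0" using sin_gt_zero_neg bounds by simp
    then show ?thesis
      using det2_pos_iff_sin[OF ray_nonzero[OF k] ray_nonzero[of 0]] next_ray_last[OF last] two_le_n
      unfolding ray_angle_def by simp
  next
    case False
    have "det2 (ray 0) (ray m) \<ge> 0" if m: "m < n" for m
    proof -
      have "ray_angle 0 \<le> ray_angle m" "ray_angle m \<le> ray_angle k" using ray_angle_mono m last by auto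
      then have "sin (ray_angle m - ray_angle 0) \<ge> 0" using sin_ge_zero False by simp
      then show ?thesis
        using det2_nonneg_iff_sin[OF ray_nonzero[of 0] ray_nonzero[OF m]] two_le_n unfolding ray_angle_def by simp
    qed
    then have False using rays_not_in_half_plane[of "ray 0"] ray_nonzero[of 0] two_le_n by simp
    then show ?thesis ..
  qed
qed

text \<open>An angular gap of at least pi would leave all Gale vectors in a half-plane.\<close>

lemma consecutive_rays:
  assumes k: "k < n"
  shows "ray k = next_ray k \<or> det2 (ray k) (next_ray k) > 0"
proof (cases "k + 1 < n")
  case False
  then show ?thesis using last_cone_proper k by simp
next
  case True
  have bounds: "- pi < ray_angle (k + 1)" "ray_angle (k + 1) \<le> pi" "- pi < ray_angle k" "ray_angle k \<le> pi"
    using ray_angle_bounds by auto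
  have "ray_angle k \<le> ray_angle (k + 1)" using ray_angle_mono True by simp
  then consider "ray_angle (k + 1) = ray_angle k" | "0 < ray_angle (k + 1) - ray_angle k \<and> ray_angle (k + 1) - ray_angle k < pi"
    | "ray_angle (k + 1) - ray_angle k \<ge> pi" by linarith
  then show ?thesis
  proof cases
    case 1
    then have "det2 (ray k) (ray (k + 1)) = 0" "dot2 (ray k) (ray (k + 1)) > 0"
      using same_ang_imp[OF ray_nonzero[OF k] ray_nonzero[OF True]] unfolding ray_angle_def by simp_all
    then have "ray k = ray (k + 1)"
      using primitive_eq_if_same_direction primitive_ray k True by blast
    then show ?thesis using next_ray_eq[OF True] by simp
  next
    case 2
    then have "sin (ray_angle (k + 1) - ray_angle k) > 0" using sin_gt_zero by simp
    then show ?thesis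
      using det2_pos_iff_sin[OF ray_nonzero[OF k] ray_nonzero[OF True]] next_ray_eq[OF True]
      unfolding ray_angle_def by simp
  next
    case 3
    have "det2 (ray (k + 1)) (ray m) \<ge> 0" if m: "m < n" for m
    proof -
      have "ray_angle m \<le> ray_angle k \<or> ray_angle (k + 1) \<le> ray_angle m"
        using ray_angle_mono m k by (cases "m \<le> k") auto
      then have "sin (ray_angle m - ray_angle (k + 1)) \<ge> 0"
        using sin_ge_zero_neg[of "ray_angle m - ray_angle (k + 1)"] sin_ge_zero[of "ray_angle m - ray_angle (k + 1)"]
          3 bounds ray_angle_bounds[of m] by fastforce
      then show ?thesis
        using det2_nonneg_iff_sin[OF ray_nonzero[OF True] ray_nonzero[OF m]] unfolding ray_angle_def by simp
    qed
    then show ?thesis using rays_not_in_half_plane ray_nonzero[OF True] by blast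
  qed
qed

lemma exists_angle_interval:
  assumes "ray_angle 0 \<le> \<theta>" "\<theta> \<le> ray_angle (n - 1)"
  shows "\<exists>k. k + 1 < n \<and> ray_angle k \<le> \<theta> \<and> \<theta> \<le> ray_angle (k + 1)"
proof -
  define K where "K = {k. k < n - 1 \<and> ray_angle k \<le> \<theta>}"
  define k where "k = Max K"
  have "finite K" "0 \<in> K" unfolding K_def using assms(1) two_le_n by auto
  then have "k \<in> K" and k_max: "\<And>k'. k' \<in> K \<Longrightarrow> k' \<le> k" unfolding k_def using Max_in Max_ge by blast+
  then have k: "k + 1 < n" "ray_angle k \<le> \<theta>" unfolding K_def by auto
  have "\<theta> \<le> ray_angle (k + 1)"
  proof (cases "k + 1 < n - 1")
    case True
    have "k + 1 \<notin> K" using k_max[of "k + 1"] by linarith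
    then show ?thesis using True unfolding K_def by auto
  next
    case False
    then have "k + 1 = n - 1" using k(1) by simp
    then show ?thesis using assms(2) by simp
  qed
  then show ?thesis using k by blast
qed

lemma cone_contains_angle_between:
  assumes k: "k + 1 < n" and v: "v \<noteq> 0" "ray_angle k \<le> ang v" "ang v \<le> ray_angle (k + 1)"
  shows "v \<in> cone_monoid (ray k) (next_ray k)"
proof -
  have kn: "k < n" using k by simp
  have bounds: "- pi < ray_angle (k + 1)" "ray_angle (k + 1) \<le> pi" "- pi < ray_angle k" "ray_angle k \<le> pi"
    using ray_angle_bounds by auto
  from consecutive_rays[OF kn] show ?thesis
  proof
    assume eq: "ray k = next_ray k"
    then have "ray_angle k = ray_angle (k + 1)" using next_ray_eq[OF k] unfolding ray_angle_def by simp
    then have "ang (ray k) = ang v" using v unfolding ray_angle_def by simp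
    then have "in_ray (ray k) v"
      using same_ang_imp[OF ray_nonzero[OF kn] v(1)] unfolding in_ray_def by simp
    then show ?thesis using eq cone_monoid_ray[OF ray_nonzero[OF kn]] by metis
  next
    assume proper: "det2 (ray k) (next_ray k) > 0"
    then have "sin (ray_angle (k + 1) - ray_angle k) > 0"
      using det2_pos_iff_sin[OF ray_nonzero[OF kn] ray_nonzero[OF k]] next_ray_eq[OF k]
      unfolding ray_angle_def by simp
    then have "ray_angle (k + 1) - ray_angle k < pi"
      using sin_pos_nonneg_imp_less v bounds by simp
    then have "sin (ang v - ray_angle k) \<ge> 0" "sin (ray_angle (k + 1) - ang v) \<ge> 0"
      using sin_ge_zero v by simp_all
    then have "det2 (ray k) v \<ge> 0" "det2 v (next_ray k) \<ge> 0"
      using det2_nonneg_iff_sin[OF ray_nonzero[OF kn] v(1)] det2_nonneg_iff_sin[OF v(1) ray_nonzero[OF k]]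
        next_ray_eq[OF k] unfolding ray_angle_def by simp_all
    then show ?thesis using cone_monoid_sector[OF proper] unfolding in_sector_def by simp
  qed
qed

lemma last_cone_contains_angle_outside:
  assumes v: "v \<noteq> 0" "ang v < ray_angle 0 \<or> ray_angle (n - 1) < ang v"
  shows "v \<in> cone_monoid (ray (n - 1)) (next_ray (n - 1))"
proof -
  define k where "k = n - 1"
  have last: "k + 1 = n" "k < n" unfolding k_def using two_le_n by auto
  have proper: "det2 (ray k) (next_ray k) > 0" using last_cone_proper[OF last(1)] .
  have next_k: "next_ray k = ray 0" using next_ray_last[OF last(1)] .
  have bounds: "- pi < ray_angle 0" "ray_angle 0 \<le> pi" "- pi < ray_angle k" "ray_angle k \<le> pi"
    "- pi < ang v" "ang v \<le> pi"
    using ray_angle_bounds ang_bounds by auto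
  have "sin (ray_angle 0 - ray_angle k) > 0"
    using proper det2_pos_iff_sin[OF ray_nonzero[OF last(2)] ray_nonzero[of 0]] next_k two_le_n
    unfolding ray_angle_def by simp
  moreover have "ray_angle 0 \<le> ray_angle k" using ray_angle_mono last by simp
  ultimately have gap: "ray_angle 0 - ray_angle k < - pi"
    using sin_pos_nonpos_imp_less bounds by simp
  have "sin (ang v - ray_angle k) > 0 \<and> sin (ray_angle 0 - ang v) > 0"
    using v(2) unfolding k_def[symmetric]
  proof
    assume "ang v < ray_angle 0"
    then show ?thesis using sin_gt_zero_neg[of "ang v - ray_angle k"] sin_gt_zero[of "ray_angle 0 - ang v"]
      gap bounds by simp
  next
    assume "ray_angle k < ang v"
    then show ?thesis using sin_gt_zero[of "ang v - ray_angle k"] sin_gt_zero_neg[of "ray_angle 0 - ang v"]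
      gap bounds by simp
  qed
  then have "det2 (ray k) v > 0" "det2 v (next_ray k) > 0"
    using det2_pos_iff_sin[OF ray_nonzero[OF last(2)] v(1)] det2_pos_iff_sin[OF v(1) ray_nonzero[of 0]]
      next_k two_le_n unfolding ray_angle_def by simp_all
  then show ?thesis using cone_monoid_sector[OF proper] unfolding in_sector_def k_def by simp
qed

lemma consecutive_cones_cover:
  assumes "v \<noteq> 0"
  shows "\<exists>k<n. v \<in> cone_monoid (ray k) (next_ray k)"
proof (cases "ray_angle 0 \<le> ang v \<and> ang v \<le> ray_angle (n - 1)")
  case True
  then show ?thesis
    using exists_angle_interval cone_contains_angle_between[OF _ assms] by (meson add_lessD1)
next
  case False
  then show ?thesis
    using last_cone_contains_angle_outside[OF assms] two_le_n by (metis diff_less not_le zero_less_one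
        less_le_trans one_le_numeral)
qed

end

lemma inner_if_positive_multiple:
  assumes "v = smul m a" "m > 0" "det2 y v > 0" "det2 v z > 0"
  shows "det2 y a > 0 \<and> det2 a z > 0"
  using assms by (auto simp: det2_smul_left det2_smul_right zero_less_mult_iff)

lemma in_sector_if_boundary_outside:
  assumes ac: "det2 a c > 0" and "primitive a" "primitive c"
    and v: "in_sector a c v" "v \<noteq> 0" and yz: "det2 y z > 0" "det2 y v > 0" "det2 v z > 0"
    and a_out: "\<not> (det2 y a > 0 \<and> det2 a z > 0)" and c_out: "\<not> (det2 y c > 0 \<and> det2 c z > 0)"
  shows "in_sector a c y" "in_sector a c z"
proof -
  have av: "det2 a v > 0"
  proof (rule ccontr)
    assume "\<not> ?thesis"
    then have "det2 v a = 0" using v(1) det2_swap[of v a] unfolding in_sector_def by simp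
    then obtain m where m: "v = smul m a" using det2_eq_0_obtains_smul \<open>primitive a\<close> by blast
    have "m * det2 a c \<ge> 0" "m \<noteq> 0"
      using v m smul_eq_0_iff unfolding in_sector_def by (auto simp: det2_smul_left)
    then have "m > 0" using ac by (simp add: zero_le_mult_iff)
    then show False using inner_if_positive_multiple[OF m _ yz(2,3)] a_out by blast
  qed
  have vc: "det2 v c > 0"
  proof (rule ccontr)
    assume "\<not> ?thesis"
    then have "det2 v c = 0" using v(1) unfolding in_sector_def by simp
    then obtain m where m: "v = smul m c" using det2_eq_0_obtains_smul \<open>primitive c\<close> by blast
    have "m * det2 a c \<ge> 0" "m \<noteq> 0"
      using v m smul_eq_0_iff unfolding in_sector_def by (auto simp: det2_smul_right)
    then have "m > 0" using ac by (simp add: zero_le_mult_iff)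
    then show False using inner_if_positive_multiple[OF m _ yz(2,3)] c_out by blast
  qed
  have ay: "det2 a y \<ge> 0"
  proof (rule ccontr)
    assume "\<not> ?thesis"
    then have "det2 y a > 0" using det2_swap[of y a] by simp
    moreover have "det2 y v * det2 a z = det2 a v * det2 y z + det2 y a * det2 v z"
      using det2_pluecker(2)[of y v a z] by simp
    moreover have "det2 a v * det2 y z > 0" "det2 y a * det2 v z > 0"
      using \<open>det2 y a > 0\<close> av yz by simp_all
    ultimately have "det2 y v * det2 a z > 0" by linarith
    then have "det2 a z > 0" using yz(2) by (simp add: zero_less_mult_iff)
    then show False using a_out \<open>det2 y a > 0\<close> by blast
  qed
  have "det2 a v * det2 y c = det2 a y * det2 v c + det2 a c * det2 y v"
    by (simp add: det2_def algebra_simps)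
  moreover have "det2 a y * det2 v c \<ge> 0" "det2 a c * det2 y v > 0" using ay vc ac yz by simp_all
  ultimately have "det2 a v * det2 y c > 0" by linarith
  then have yc: "det2 y c > 0" using av by (simp add: zero_less_mult_iff)
  then have zc: "det2 z c \<ge> 0" using c_out det2_swap[of z c] by linarith
  have "det2 a z * det2 v c = det2 a v * det2 z c + det2 a c * det2 v z"
    by (simp add: det2_def algebra_simps)
  moreover have "det2 a v * det2 z c \<ge> 0" "det2 a c * det2 v z > 0" using av zc ac yz by simp_all
  ultimately have "det2 a z * det2 v c > 0" by linarith
  then have "det2 a z > 0" using vc by (simp add: zero_less_mult_iff)
  then show "in_sector a c y" "in_sector a c z"
    using ay yc zc unfolding in_sector_def by auto
qed

context ccw_gale_config
begin

definition hilbert_union :: "(int \<times> int) set" where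
  "hilbert_union = (\<Union>k<n. hilbert_basis (cone_monoid (ray k) (next_ray k)))"

lemma hilbert_basis_consecutive:
  assumes k: "k < n"
  shows "hilbert_basis (cone_monoid (ray k) (next_ray k)) = irreducibles (cone_monoid (ray k) (next_ray k))"
  using consecutive_rays[OF k] hilbert_basis_ray[OF ray_nonzero[OF k]] hilbert_basis_sector by metis

lemma mem_hilbert_union_iff:
  "x \<in> hilbert_union \<longleftrightarrow> (\<exists>k<n. x \<in> irreducibles (cone_monoid (ray k) (next_ray k)))"
  unfolding hilbert_union_def using hilbert_basis_consecutive by auto

lemma gale_in_hilbert_union:
  assumes i: "i < n"
  shows "w i \<in> hilbert_union"
proof -
  obtain k where k: "k < n" "w i = ray k" using gale_eq_ray[OF i] by blast
  have "ray k \<in> irreducibles (cone_monoid (ray k) (next_ray k))"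
    using consecutive_rays[OF k(1)]
  proof
    assume eq: "ray k = next_ray k"
    have "in_ray (ray k) (ray k)" unfolding in_ray_def dot2_def by (simp add: det2_self)
    then show ?thesis
      using primitive_ray_irreducible[OF primitive_ray[OF k(1)] primitive_ray[OF k(1)]]
        irreducibles_ray[OF ray_nonzero[OF k(1)]] ray_nonzero[OF k(1)] eq by metis
  next
    assume proper: "det2 (ray k) (next_ray k) > 0"
    have "in_sector (ray k) (next_ray k) (ray k)" using proper unfolding in_sector_def by (simp add: det2_self)
    then show ?thesis
      using sector_irreducible_start[OF proper primitive_ray[OF k(1)]] irreducibles_sector[OF proper]
        ray_nonzero[OF k(1)] by blast
  qed
  then show ?thesis using mem_hilbert_union_iff k by auto
qed

lemma neg_gale_in_hilbert_union:
  assumes i: "i < n" and indisp: "indispensable (w i)"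
  shows "- w i \<in> hilbert_union"
proof -
  have v: "- w i \<noteq> 0" "primitive (- w i)"
    using gale_nonzero[OF i] primitive_gale[OF i] primitive_uminus by auto
  obtain k where k: "k < n" "- w i \<in> cone_monoid (ray k) (next_ray k)"
    using consecutive_cones_cover[OF v(1)] by blast
  have "- w i \<in> irreducibles (cone_monoid (ray k) (next_ray k))"
    using consecutive_rays[OF k(1)]
  proof
    assume eq: "ray k = next_ray k"
    then have "in_ray (ray k) (- w i)" using k(2) cone_monoid_ray[OF ray_nonzero[OF k(1)]] by metis
    then show ?thesis
      using primitive_ray_irreducible[OF primitive_ray[OF k(1)] v(2)]
        irreducibles_ray[OF ray_nonzero[OF k(1)]] v(1) eq by metis
  next
    assume proper: "det2 (ray k) (next_ray k) > 0"
    then have "in_sector (ray k) (next_ray k) (- w i)" using k(2) cone_monoid_sector by blast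
    then show ?thesis
      using neg_gale_sector_irreducible[OF proper gale_free_consecutive[OF k(1)] i indisp]
        irreducibles_sector[OF proper] v(1) by blast
  qed
  then show ?thesis using mem_hilbert_union_iff k(1) by blast
qed

lemma inner_neg_gale_irreducible_if_in_hilbert_union:
  assumes neg: "\<forall>i<n. - w i \<in> hilbert_union" and yz: "det2 y z > 0" and free: "gale_free y z"
  shows "inner_neg_gale_irreducible y z"
  unfolding inner_neg_gale_irreducible_def
proof (intro allI impI)
  fix i assume i: "i < n" and inner: "det2 y (- w i) > 0 \<and> det2 (- w i) z > 0"
  define v where "v = - w i"
  have "v \<noteq> 0" using gale_nonzero[OF i] unfolding v_def by simp
  obtain k where k: "k < n" "v \<in> irreducibles (cone_monoid (ray k) (next_ray k))"
    using neg i mem_hilbert_union_iff unfolding v_def by blast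
  have "\<sigma> k < n" "\<sigma> ((k + 1) mod n) < n" using \<sigma>_less k(1) two_le_n by simp_all
  then have outside: "\<not> (det2 y u > 0 \<and> det2 u z > 0)" if "u = ray k \<or> u = next_ray k" for u
    using free that unfolding gale_free_def ray_def next_ray_def by blast
  show "sector_irreducible y z (- w i)"
    using consecutive_rays[OF k(1)]
  proof
    assume "ray k = next_ray k"
    then have "in_ray (ray k) v" using k(2) irreducibles_ray[OF ray_nonzero[OF k(1)]] by metis
    then have "det2 v (ray k) = 0" "dot2 (ray k) v \<ge> 0"
      using det2_swap[of v "ray k"] unfolding in_ray_def by simp_all
    obtain m where m: "v = smul m (ray k)"
      using det2_eq_0_obtains_smul[OF primitive_ray[OF k(1)] \<open>det2 v (ray k) = 0\<close>] .
    have "m * dot2 (ray k) (ray k) \<ge> 0"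
      using \<open>dot2 (ray k) v \<ge> 0\<close> unfolding m by (simp add: smul_def dot2_def algebra_simps)
    moreover have "m \<noteq> 0" using \<open>v \<noteq> 0\<close> m smul_eq_0_iff by simp
    ultimately have "m > 0" using dot2_self_pos[OF ray_nonzero[OF k(1)]] by (simp add: zero_le_mult_iff)
    then show ?thesis using inner_if_positive_multiple[OF m] inner outside unfolding v_def by blast
  next
    assume proper: "det2 (ray k) (next_ray k) > 0"
    have v: "in_sector (ray k) (next_ray k) v" "sector_irreducible (ray k) (next_ray k) v"
      using k(2) irreducibles_sector[OF proper] by auto
    have "in_sector (ray k) (next_ray k) y" "in_sector (ray k) (next_ray k) z"
      using in_sector_if_boundary_outside[OF proper primitive_ray[OF k(1)] primitive_next_ray[OF k(1)]
          v(1) \<open>v \<noteq> 0\<close> yz] inner outside unfolding v_def by auto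
    then show ?thesis using sector_irreducible_subsector[OF yz _ _ v(2)] unfolding v_def by blast
  qed
qed

theorem all_graver_indispensable_iff:
  "(\<forall>l. graver l \<longrightarrow> indispensable l) \<longleftrightarrow> (\<forall>i<n. - w i \<in> hilbert_union)"
  using neg_gale_in_hilbert_union graver_gale graver_indispensable_if_inner_neg_gale_irreducible
    inner_neg_gale_irreducible_if_in_hilbert_union by blast

end

section \<open>Binomials of I_A in kernel coordinates\<close>

lemma natvecs_eqI:
  assumes "u \<in> natvecs n" "v \<in> natvecs n" "\<And>j. j < n \<Longrightarrow> u j = v j"
  shows "u = v"
proof
  fix j show "u j = v j" using assms unfolding natvecs_def by (cases "j < n") auto
qed

lemma matmul_exchange:
  assumes "matmul A m n u' = matmul A m n v'" "u' \<le> u"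
  shows "matmul A m n (\<lambda>j. u j - u' j + v' j) = matmul A m n u"
proof -
  have eq: "int (u j - u' j + v' j) = int (u j) - int (u' j) + int (v' j)" for j
  proof -
    have "u' j \<le> u j" using assms(2) by (simp add: le_fun_def)
    then show ?thesis by (simp add: of_nat_diff)
  qed
  have "(\<Sum>j<n. A i j * int (u j - u' j + v' j)) =
      (\<Sum>j<n. A i j * int (u j) - A i j * int (u' j) + A i j * int (v' j))" for i
    unfolding eq by (simp add: algebra_simps)
  then have "(\<Sum>j<n. A i j * int (u j - u' j + v' j)) =
      (\<Sum>j<n. A i j * int (u j)) - (\<Sum>j<n. A i j * int (u' j)) + (\<Sum>j<n. A i j * int (v' j))" for i
    by (simp only: sum.distrib sum_subtractf)
  moreover have "(\<Sum>j<n. A i j * int (u' j)) = (\<Sum>j<n. A i j * int (v' j))" if "i < m" for i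
    using fun_cong[OF assms(1), of i] that unfolding matmul_def by simp
  ultimately show ?thesis unfolding matmul_def by auto
qed

text \<open>A proper part p^u' - p^v' of p^u - p^v would give the third fiber element u - u' + v'.\<close>

lemma indispensable_set_subset_graver_set: "indispensable_set A m n \<subseteq> graver_set A m n"
proof safe
  fix u v assume "(u, v) \<in> indispensable_set A m n"
  then have u: "u \<in> natvecs n" and v: "v \<in> natvecs n" and "u \<noteq> v"
    and fiber: "fiber A m n u = {u, v}" and disjoint: "\<And>j. u j = 0 \<or> v j = 0"
    unfolding indispensable_set_def by auto
  have False
    if part: "u' \<in> natvecs n" "v' \<in> natvecs n" "u' \<noteq> v'" "matmul A m n u' = matmul A m n v'"
      "u' \<le> u" "v' \<le> v" "(u', v') \<noteq> (u, v)" for u' v'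
  proof -
    define t where "t = (\<lambda>j. u j - u' j + v' j)"
    have le: "u' j \<le> u j" "v' j \<le> v j" for j using part(5,6) by (auto simp: le_fun_def)
    have "t \<in> natvecs n" using u part(2) unfolding natvecs_def t_def by auto
    then have "t \<in> fiber A m n u" using matmul_exchange[OF part(4,5)] unfolding fiber_def t_def by simp
    then consider "t = u" | "t = v" using fiber by blast
    then show False
    proof cases
      case 1
      have "u' j = v' j" for j using fun_cong[OF 1, of j] le[of j] unfolding t_def by linarith
      then show False using part(3) by (simp add: fun_eq_iff)
    next
      case 2
      have "u' j = u j \<and> v' j = v j" for j
        using fun_cong[OF 2, of j] le[of j] disjoint[of j] unfolding t_def by (cases "u j = 0") arith+
      then show False using part(7) by (simp add: fun_eq_iff)
    qed
  qed
  moreover have "v \<in> fiber A m n u" using fiber by simp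
  then have "matmul A m n u = matmul A m n v" unfolding fiber_def by simp
  ultimately show "(u, v) \<in> graver_set A m n"
    unfolding graver_set_def using u v \<open>u \<noteq> v\<close> by blast
qed

lemma graver_set_disjoint_support:
  assumes "(u, v) \<in> graver_set A m n"
  shows "u j = 0 \<or> v j = 0"
proof (rule ccontr)
  assume both: "\<not> (u j = 0 \<or> v j = 0)"
  have u: "u \<in> natvecs n" and v: "v \<in> natvecs n" and "u \<noteq> v"
    and same: "matmul A m n u = matmul A m n v"
    and minimal: "\<And>u' v'. u' \<in> natvecs n \<Longrightarrow> v' \<in> natvecs n \<Longrightarrow> u' \<noteq> v' \<Longrightarrow>
       matmul A m n u' = matmul A m n v' \<Longrightarrow> u' \<le> u \<Longrightarrow> v' \<le> v \<Longrightarrow> (u', v') = (u, v)"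
    using assms unfolding graver_set_def by auto
  have "j < n" using u both unfolding natvecs_def by force
  define u' v' where "u' = u(j := u j - 1)" and "v' = v(j := v j - 1)"
  have "int (u' k) - int (v' k) = int (u k) - int (v k)" for k
    using both unfolding u'_def v'_def by (simp add: of_nat_diff)
  then have "u' \<noteq> v'" using \<open>u \<noteq> v\<close> by (metis diff_diff_cancel eq_iff_diff_eq_0 ext of_nat_eq_iff)
  have "matmul A m n u' = matmul A m n v'"
  proof
    fix i
    have "matmul A m n u' i - matmul A m n v' i = matmul A m n u i - matmul A m n v i"
      using \<open>\<And>k. int (u' k) - int (v' k) = int (u k) - int (v k)\<close>
      unfolding matmul_def by (simp add: sum_subtractf[symmetric] right_diff_distrib[symmetric])
    then show "matmul A m n u' i = matmul A m n v' i" using same by simp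
  qed
  moreover have "u' \<in> natvecs n" "v' \<in> natvecs n" using u v \<open>j < n\<close> unfolding natvecs_def u'_def v'_def by auto
  moreover have "u' \<le> u" "v' \<le> v" unfolding u'_def v'_def le_fun_def by auto
  ultimately have "u' = u" using minimal \<open>u' \<noteq> v'\<close> by blast
  then show False using both unfolding u'_def by (metis diff_less fun_upd_same less_numeral_extra(1) less_irrefl neq0_conv)
qed

lemma mult_pos_min_max_zero:
  fixes g a c :: int
  assumes "g > 0"
  shows "g * a \<le> max 0 (g * c) \<longleftrightarrow> a \<le> max 0 c"
    and "min 0 (g * c) \<le> g * a \<longleftrightarrow> min 0 c \<le> a"
proof -
  have "max 0 (g * c) = g * max 0 c" "min 0 (g * c) = g * min 0 c"
    using assms by (simp_all add: max_def min_def mult_le_0_iff zero_le_mult_iff)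
  then show "g * a \<le> max 0 (g * c) \<longleftrightarrow> a \<le> max 0 c" "min 0 (g * c) \<le> g * a \<longleftrightarrow> min 0 c \<le> a"
    using assms by simp_all
qed

locale gale_kernel =
  fixes A :: "nat \<Rightarrow> nat \<Rightarrow> int" and m n :: nat and b :: "nat \<Rightarrow> int \<times> int"
  assumes gale: "gale_transform A m n b" and pointed: "pointed_kernel A m n"
    and rows_nonzero: "\<forall>j<n. b j \<noteq> (0, 0)"
begin

definition kvec :: "int \<times> int \<Rightarrow> nat \<Rightarrow> int" where
  "kvec l j = fst l * fst (b j) + snd l * snd (b j)"

lemma kvec_zero: "kvec 0 j = 0"
  by (simp add: kvec_def)

lemma gcd_rows_pos: "j < n \<Longrightarrow> gcd (fst (b j)) (snd (b j)) > 0"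
  using rows_nonzero by (auto simp: prod_eq_iff)

lemma reduced_gale_eq:
  "reduced_gale (b j) = (- (snd (b j) div gcd (fst (b j)) (snd (b j))), fst (b j) div gcd (fst (b j)) (snd (b j)))"
  unfolding reduced_gale_def by (simp add: dvd_neg_div)

lemma kvec_eq_det2: "j < n \<Longrightarrow> kvec l j = gcd (fst (b j)) (snd (b j)) * det2 l (reduced_gale (b j))"
  unfolding kvec_def det2_def reduced_gale_eq by (simp add: algebra_simps)

lemma primitive_reduced_gale: "j < n \<Longrightarrow> primitive (reduced_gale (b j))"
proof -
  assume "j < n"
  then have "fst (b j) \<noteq> 0 \<or> snd (b j) \<noteq> 0" using rows_nonzero by (auto simp: prod_eq_iff)
  then have "coprime (fst (b j) div gcd (fst (b j)) (snd (b j))) (snd (b j) div gcd (fst (b j)) (snd (b j)))"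
    by (rule div_gcd_coprime)
  then show ?thesis unfolding primitive_def reduced_gale_eq by (simp add: coprime_commute)
qed

lemma kvec_in_kernel: "i < m \<Longrightarrow> (\<Sum>j<n. A i j * kvec l j) = 0"
proof -
  assume "i < m"
  have "(\<Sum>j<n. A i j * kvec l j) = fst l * (\<Sum>j<n. A i j * fst (b j)) + snd l * (\<Sum>j<n. A i j * snd (b j))"
    unfolding kvec_def by (simp add: algebra_simps sum.distrib sum_distrib_left)
  then show ?thesis using gale \<open>i < m\<close> unfolding gale_transform_def by simp
qed

lemma kernel_eq_kvec: "\<forall>i<m. (\<Sum>j<n. A i j * x j) = 0 \<Longrightarrow> \<exists>l. \<forall>j<n. x j = kvec l j"
  using gale unfolding gale_transform_def kvec_def by blast

lemma kvec_inj:
  assumes "\<forall>j<n. kvec l j = kvec l' j"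
  shows "l = l'"
proof -
  have "\<forall>i<m. (\<Sum>j<n. A i j * kvec l j) = 0" using kvec_in_kernel by blast
  then have "\<exists>!l0. \<forall>j<n. kvec l j = fst l0 * fst (b j) + snd l0 * snd (b j)"
    using gale unfolding gale_transform_def by blast
  moreover have "\<forall>j<n. kvec l j = fst l * fst (b j) + snd l * snd (b j)"
    "\<forall>j<n. kvec l j = fst l' * fst (b j) + snd l' * snd (b j)"
    using assms unfolding kvec_def by simp_all
  ultimately show ?thesis by blast
qed

lemma reduced_gale_not_in_half_plane: "l \<noteq> 0 \<Longrightarrow> \<exists>j<n. det2 l (reduced_gale (b j)) < 0"
proof (rule ccontr)
  assume "l \<noteq> 0" "\<not> (\<exists>j<n. det2 l (reduced_gale (b j)) < 0)"
  have "kvec l j \<ge> 0" if "j < n" for j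
  proof -
    have "det2 l (reduced_gale (b j)) \<ge> 0"
      using \<open>\<not> (\<exists>j<n. det2 l (reduced_gale (b j)) < 0)\<close> that by (meson not_less)
    then show ?thesis using kvec_eq_det2[OF that] gcd_rows_pos[OF that] by simp
  qed
  then have "\<forall>j<n. kvec l j \<ge> 0" by blast
  moreover have "\<forall>i<m. (\<Sum>j<n. A i j * kvec l j) = 0" using kvec_in_kernel by blast
  ultimately have "\<forall>j<n. kvec l j = 0" using pointed unfolding pointed_kernel_def by blast
  then have "\<forall>j<n. kvec l j = kvec 0 j" by (simp add: kvec_def)
  then show False using kvec_inj \<open>l \<noteq> 0\<close> by blast
qed

sublocale gale_config n "\<lambda>j. reduced_gale (b j)"
  using primitive_reduced_gale reduced_gale_not_in_half_plane by unfold_locales auto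

lemma conformal_part_iff_kvec:
  "conformal_part l y \<longleftrightarrow> (\<forall>j<n. min 0 (kvec l j) \<le> kvec y j \<and> kvec y j \<le> max 0 (kvec l j))"
  unfolding conformal_part_def using kvec_eq_det2 gcd_rows_pos mult_pos_min_max_zero by auto

lemma in_pos_fiber_iff_kvec: "in_pos_fiber l y \<longleftrightarrow> (\<forall>j<n. kvec y j \<le> max 0 (kvec l j))"
  unfolding in_pos_fiber_def using kvec_eq_det2 gcd_rows_pos mult_pos_min_max_zero by auto

lemma matmul_eq_iff_kvec:
  "matmul A m n u = matmul A m n v \<longleftrightarrow> (\<exists>l. \<forall>j<n. int (u j) - int (v j) = kvec l j)"
proof -
  have "matmul A m n u = matmul A m n v \<longleftrightarrow> (\<forall>i<m. (\<Sum>j<n. A i j * (int (u j) - int (v j))) = 0)"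
    unfolding matmul_def by (auto simp: fun_eq_iff right_diff_distrib sum_subtractf)
  also have "\<dots> \<longleftrightarrow> (\<exists>l. \<forall>j<n. int (u j) - int (v j) = kvec l j)"
  proof
    assume "\<forall>i<m. (\<Sum>j<n. A i j * (int (u j) - int (v j))) = 0"
    then show "\<exists>l. \<forall>j<n. int (u j) - int (v j) = kvec l j" by (rule kernel_eq_kvec)
  next
    assume "\<exists>l. \<forall>j<n. int (u j) - int (v j) = kvec l j"
    then obtain l where l: "\<forall>j<n. int (u j) - int (v j) = kvec l j" by blast
    have "(\<Sum>j<n. A i j * (int (u j) - int (v j))) = (\<Sum>j<n. A i j * kvec l j)" for i
      by (rule sum.cong) (use l in auto)
    then show "\<forall>i<m. (\<Sum>j<n. A i j * (int (u j) - int (v j))) = 0" using kvec_in_kernel by simp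
  qed
  finally show ?thesis .
qed

definition pos_part :: "int \<times> int \<Rightarrow> nat \<Rightarrow> nat" where
  "pos_part l j = (if j < n then nat (max 0 (kvec l j)) else 0)"

definition neg_part :: "int \<times> int \<Rightarrow> nat \<Rightarrow> nat" where
  "neg_part l j = (if j < n then nat (max 0 (- kvec l j)) else 0)"

lemma pos_part_natvecs: "pos_part l \<in> natvecs n"
  and neg_part_natvecs: "neg_part l \<in> natvecs n"
  unfolding natvecs_def pos_part_def neg_part_def by auto

lemma int_pos_part: "j < n \<Longrightarrow> int (pos_part l j) = max 0 (kvec l j)"
  and int_neg_part: "j < n \<Longrightarrow> int (neg_part l j) = max 0 (- kvec l j)"
  unfolding pos_part_def neg_part_def by auto

lemma pos_minus_neg_part: "j < n \<Longrightarrow> int (pos_part l j) - int (neg_part l j) = kvec l j"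
  using int_pos_part int_neg_part by simp

lemma pos_neg_part_disjoint: "pos_part l j = 0 \<or> neg_part l j = 0"
  unfolding pos_part_def neg_part_def by auto

lemma matmul_pos_part_eq_neg_part: "matmul A m n (pos_part l) = matmul A m n (neg_part l)"
  unfolding matmul_eq_iff_kvec using pos_minus_neg_part by blast

lemma pos_part_ne_neg_part:
  assumes "l \<noteq> 0"
  shows "pos_part l \<noteq> neg_part l"
proof
  assume eq: "pos_part l = neg_part l"
  have "\<forall>j<n. kvec l j = kvec 0 j" using pos_minus_neg_part[of _ l] by (simp add: eq kvec_def)
  then show False using kvec_inj assms by blast
qed

lemma graver_set_eq_parts:
  assumes "(u, v) \<in> graver_set A m n"
  obtains l where "u = pos_part l" "v = neg_part l"
proof -
  have u: "u \<in> natvecs n" and v: "v \<in> natvecs n" and "matmul A m n u = matmul A m n v"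
    using assms unfolding graver_set_def by auto
  then obtain l where l: "\<forall>j<n. int (u j) - int (v j) = kvec l j" using matmul_eq_iff_kvec by blast
  have parts: "int (u j) = int (pos_part l j) \<and> int (v j) = int (neg_part l j)" if "j < n" for j
    using l that graver_set_disjoint_support[OF assms, of j] int_pos_part int_neg_part by auto
  show thesis
  proof
    show "u = pos_part l" using natvecs_eqI[OF u pos_part_natvecs] parts by simp
    show "v = neg_part l" using natvecs_eqI[OF v neg_part_natvecs] parts by simp
  qed
qed

end

context gale_kernel
begin

lemma pos_neg_part_le_if_conformal:
  assumes "conformal_part l y"
  shows "pos_part y \<le> pos_part l" "neg_part y \<le> neg_part l"
proof -
  have "max 0 (kvec y j) \<le> max 0 (kvec l j) \<and> max 0 (- kvec y j) \<le> max 0 (- kvec l j)" if "j < n" for j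
    using assms[unfolded conformal_part_iff_kvec, rule_format, OF that] by (auto simp: max_def min_def split: if_splits)
  then show "pos_part y \<le> pos_part l" "neg_part y \<le> neg_part l"
    unfolding le_fun_def pos_part_def neg_part_def by (auto intro: nat_mono)
qed

lemma graver_if_in_graver_set:
  assumes "(pos_part l, neg_part l) \<in> graver_set A m n"
  shows "graver l"
  unfolding graver_def
proof (intro conjI allI impI)
  have ne: "pos_part l \<noteq> neg_part l"
    and minimal: "\<And>u' v'. u' \<in> natvecs n \<Longrightarrow> v' \<in> natvecs n \<Longrightarrow> u' \<noteq> v' \<Longrightarrow>
       matmul A m n u' = matmul A m n v' \<Longrightarrow> u' \<le> pos_part l \<Longrightarrow> v' \<le> neg_part l \<Longrightarrow>
       (u', v') = (pos_part l, neg_part l)"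
    using assms unfolding graver_set_def by auto
  show "l \<noteq> 0" using ne by (auto simp: pos_part_def neg_part_def kvec_def)
  fix y assume conf: "conformal_part l y"
  show "y = 0 \<or> y = l"
  proof (rule ccontr)
    assume "\<not> (y = 0 \<or> y = l)"
    then have "(pos_part y, neg_part y) = (pos_part l, neg_part l)"
      using minimal[OF pos_part_natvecs neg_part_natvecs pos_part_ne_neg_part matmul_pos_part_eq_neg_part
          pos_neg_part_le_if_conformal[OF conf]] by blast
    then have "\<forall>j<n. kvec y j = kvec l j" using pos_minus_neg_part by (metis prod.inject)
    then show False using kvec_inj \<open>\<not> (y = 0 \<or> y = l)\<close> by blast
  qed
qed

lemma in_graver_set_if_graver:
  assumes "graver l"
  shows "(pos_part l, neg_part l) \<in> graver_set A m n"
proof -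
  have "l \<noteq> 0" and graver: "\<And>y. conformal_part l y \<Longrightarrow> y = 0 \<or> y = l"
    using assms unfolding graver_def by auto
  have "\<not> (\<exists>u' v'. u' \<in> natvecs n \<and> v' \<in> natvecs n \<and> u' \<noteq> v' \<and>
      matmul A m n u' = matmul A m n v' \<and> u' \<le> pos_part l \<and> v' \<le> neg_part l \<and>
      (u', v') \<noteq> (pos_part l, neg_part l))"
  proof (intro notI, elim exE conjE)
    fix u' v' assume part: "u' \<in> natvecs n" "v' \<in> natvecs n" "u' \<noteq> v'"
      "matmul A m n u' = matmul A m n v'" "u' \<le> pos_part l" "v' \<le> neg_part l"
      "(u', v') \<noteq> (pos_part l, neg_part l)"
    obtain y where y: "\<forall>j<n. int (u' j) - int (v' j) = kvec y j"
      using part(4) matmul_eq_iff_kvec by blast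
    have le: "u' j \<le> pos_part l j" "v' j \<le> neg_part l j" for j
      using part(5,6) by (simp_all add: le_fun_def)
    have "min 0 (kvec l j) \<le> kvec y j \<and> kvec y j \<le> max 0 (kvec l j)" if "j < n" for j
    proof -
      have "int (u' j) \<le> max 0 (kvec l j)" "int (v' j) \<le> max 0 (- kvec l j)"
        using le[of j] int_pos_part[OF that, of l] int_neg_part[OF that, of l] by simp_all
      moreover have "max 0 (- kvec l j) = - min 0 (kvec l j)" by (simp add: max_def min_def)
      ultimately show ?thesis using y[rule_format, OF that] by linarith
    qed
    then have "conformal_part l y" unfolding conformal_part_iff_kvec by blast
    then consider "y = 0" | "y = l" using graver by blast
    then show False
    proof cases
      case 1
      then have "u' = v'" using natvecs_eqI[OF part(1,2)] y by (simp add: kvec_zero)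
      then show False using part(3) by simp
    next
      case 2
      have "u' j = pos_part l j \<and> v' j = neg_part l j" if "j < n" for j
      proof -
        have "int (u' j) - int (v' j) = int (pos_part l j) - int (neg_part l j)"
          using y 2 pos_minus_neg_part[OF that, of l] that by simp
        then show ?thesis using pos_neg_part_disjoint[of l j] le[of j] by auto
      qed
      then have "u' = pos_part l" "v' = neg_part l"
        using natvecs_eqI[OF part(1) pos_part_natvecs] natvecs_eqI[OF part(2) neg_part_natvecs] by auto
      then show False using part(7) by simp
    qed
  qed
  then show ?thesis
    unfolding graver_set_def
    using pos_part_natvecs neg_part_natvecs pos_part_ne_neg_part[OF \<open>l \<noteq> 0\<close>] matmul_pos_part_eq_neg_part
    by blast
qed

lemma in_indispensable_set_if_indispensable:
  assumes "l \<noteq> 0" "indispensable l"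
  shows "(pos_part l, neg_part l) \<in> indispensable_set A m n"
proof -
  have "t \<in> {pos_part l, neg_part l}" if "t \<in> fiber A m n (pos_part l)" for t
  proof -
    have t: "t \<in> natvecs n" "matmul A m n (pos_part l) = matmul A m n t"
      using that unfolding fiber_def by auto
    then obtain y where y: "\<forall>j<n. int (pos_part l j) - int (t j) = kvec y j"
      using matmul_eq_iff_kvec by blast
    have "kvec y j \<le> max 0 (kvec l j)" if "j < n" for j
      using y[rule_format, OF that] int_pos_part[OF that, of l] of_nat_0_le_iff[of "t j"] by linarith
    then have "y = 0 \<or> y = l" using assms(2) unfolding indispensable_def in_pos_fiber_iff_kvec by blast
    then show ?thesis
    proof
      assume "y = 0"
      then have "t = pos_part l"
        using natvecs_eqI[OF t(1) pos_part_natvecs] y by (simp add: kvec_zero)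
      then show ?thesis by simp
    next
      assume "y = l"
      then have "int (t j) = int (neg_part l j)" if "j < n" for j
        using y that pos_minus_neg_part[OF that, of l] by auto
      then have "t = neg_part l" using natvecs_eqI[OF t(1) neg_part_natvecs] by simp
      then show ?thesis by simp
    qed
  qed
  moreover have "{pos_part l, neg_part l} \<subseteq> fiber A m n (pos_part l)"
    unfolding fiber_def using pos_part_natvecs neg_part_natvecs matmul_pos_part_eq_neg_part by auto
  ultimately have "fiber A m n (pos_part l) = {pos_part l, neg_part l}" by blast
  then show ?thesis
    unfolding indispensable_set_def
    using pos_part_natvecs neg_part_natvecs pos_part_ne_neg_part[OF assms(1)] pos_neg_part_disjoint
    by simp
qed

lemma indispensable_if_in_indispensable_set:
  assumes "(pos_part l, neg_part l) \<in> indispensable_set A m n"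
  shows "indispensable l"
  unfolding indispensable_def
proof (intro allI impI)
  fix y assume "in_pos_fiber l y"
  then have below: "kvec y j \<le> int (pos_part l j)" if "j < n" for j
    using that int_pos_part[OF that, of l] unfolding in_pos_fiber_iff_kvec by simp
  define t where "t j = (if j < n then nat (int (pos_part l j) - kvec y j) else 0)" for j
  have t_int: "int (t j) = int (pos_part l j) - kvec y j" if "j < n" for j
    using below[OF that] that unfolding t_def by simp
  have "t \<in> natvecs n" unfolding natvecs_def t_def by auto
  moreover have "matmul A m n (pos_part l) = matmul A m n t"
    unfolding matmul_eq_iff_kvec using t_int by (intro exI[of _ y]) auto
  ultimately have "t \<in> fiber A m n (pos_part l)" unfolding fiber_def by simp
  then have "t = pos_part l \<or> t = neg_part l" using assms unfolding indispensable_set_def by auto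
  then show "y = 0 \<or> y = l"
  proof
    assume "t = pos_part l"
    then have "\<forall>j<n. kvec y j = kvec 0 j" using t_int by (simp add: kvec_zero)
    then show ?thesis using kvec_inj by blast
  next
    assume t: "t = neg_part l"
    have "kvec y j = kvec l j" if "j < n" for j
      using t_int[OF that] pos_minus_neg_part[OF that, of l] unfolding t by linarith
    then have "\<forall>j<n. kvec y j = kvec l j" by blast
    then show ?thesis using kvec_inj by blast
  qed
qed

theorem strongly_robust_iff_graver_indispensable:
  "strongly_robust A m n \<longleftrightarrow> (\<forall>l. graver l \<longrightarrow> indispensable l)"
proof
  assume "strongly_robust A m n"
  then show "\<forall>l. graver l \<longrightarrow> indispensable l"
    unfolding strongly_robust_def
    using in_graver_set_if_graver indispensable_if_in_indispensable_set by blast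
next
  assume all: "\<forall>l. graver l \<longrightarrow> indispensable l"
  have "graver_set A m n \<subseteq> indispensable_set A m n"
  proof safe
    fix u v assume uv: "(u, v) \<in> graver_set A m n"
    then obtain l where l: "u = pos_part l" "v = neg_part l" by (rule graver_set_eq_parts)
    then have "graver l" using uv graver_if_in_graver_set by simp
    then show "(u, v) \<in> indispensable_set A m n"
      using all l in_indispensable_set_if_indispensable graver_def by blast
  qed
  then show "strongly_robust A m n"
    unfolding strongly_robust_def using indispensable_set_subset_graver_set by blast
qed

end

theorem lemma2p5:
  fixes n :: nat and A :: "nat \<Rightarrow> nat \<Rightarrow> int" and b :: "nat \<Rightarrow> int \<times> int"
    and \<sigma> :: "nat \<Rightarrow> nat"
  assumes "n \<ge> 2"
    and "full_row_rank A (n - 2) n"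
    and "pointed_kernel A (n - 2) n"
    and "gale_transform A (n - 2) n b"
    and "\<forall>j<n. b j \<noteq> (0, 0)"
    and "ccw_order n (\<lambda>j. reduced_gale (b j)) \<sigma>"
  shows "strongly_robust A (n - 2) n \<longleftrightarrow>
         (\<forall>i<n. neg2 (reduced_gale (b i)) \<in> gale_hilbert n (\<lambda>j. reduced_gale (b j)) \<sigma>)"
proof -
  interpret kernel: gale_kernel A "n - 2" n b
    using assms(3-5) by unfold_locales
  interpret cones: ccw_gale_config n "\<lambda>j. reduced_gale (b j)" \<sigma>
    using assms(1,6) by unfold_locales
  have hilbert: "gale_hilbert n (\<lambda>j. reduced_gale (b j)) \<sigma> = {u. u \<in> cones.hilbert_union \<and> - u \<in> cones.hilbert_union}"
    unfolding gale_hilbert_def cones.hilbert_union_def cones.ray_def cones.next_ray_def neg2_def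
    by (simp add: uminus_prod_def)
  have "strongly_robust A (n - 2) n \<longleftrightarrow> (\<forall>l. kernel.graver l \<longrightarrow> kernel.indispensable l)"
    by (rule kernel.strongly_robust_iff_graver_indispensable)
  also have "\<dots> \<longleftrightarrow> (\<forall>i<n. - reduced_gale (b i) \<in> cones.hilbert_union)"
    by (rule cones.all_graver_indispensable_iff)
  also have "\<dots> \<longleftrightarrow> (\<forall>i<n. neg2 (reduced_gale (b i)) \<in> gale_hilbert n (\<lambda>j. reduced_gale (b j)) \<sigma>)"
    unfolding hilbert using cones.gale_in_hilbert_union by (simp add: neg2_def uminus_prod_def)
  finally show ?thesis .
qed

end
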